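(* Let $M$ be a path-connected pre-$\Delta$-monoid with identity $e$, let $\alpha_n\in\Omega(M,e)$ be a null-sequence, let $\beta,\beta':[0,1]\to M$ be paths from $e$ to $b$ that are path-homotopic, and let $\phi:\mathbb{N}\to\mathbb{N}$ be a bijection. Then $\mathcal{S}_\beta^{\alpha_n}\simeq\mathcal{S}_{\beta'}^{\alpha_{\phi(n)}}$ (path-homotopic).
   Context: A pre-$\Delta$-monoid is a space $M$ with an associative operation $\ast$ with identity $e$ such that for any continuous paths $\alpha,\beta:[0,1]\to M$, the pointwise product $t\mapsto\alpha(t)\ast\beta(t)$ is continuous. A sequence of loops $\alpha_n\in\Omega(M,e)$ is a null-sequence if every neighborhood of $e$ contains $\mathrm{Im}(\alpha_n)$ for all but finitely many $n$. Let $\mathcal{C}\subseteq[0,1]$ be the middle-thirds Cantor set and write $[0,1]\setminus\mathcal{C}=\bigcup_{m\ge1}\bigcup_{k=1}^{2^{m-1}}I_m^k$ (open intervals of length $3^{-m}$, indexed left to right for fixed $m$); set $I_n:=I_m^k$ where $n=2^{m-1}+k-1$ (this is a bijection between $\mathbb{N}$ and the components of $[0,1]\setminus\mathcal{C}$). Let $\Gamma:[0,1]\to[0,1]$ be the ternary Cantor function (constant on each $\overline{I_n}$), and $k_n:\overline{I_n}\to[0,1]$ the increasing linear homeomorphism. The transfinite slide of $\{\alpha_n\}$ along a path $\beta:[0,1]\to M$ with $\beta(0)=e$ is the path $\mathcal{S}_\beta^{\alpha_n}:[0,1]\to M$ given by $\mathcal{S}_\beta^{\alpha_n}(t)=\beta(\Gamma(t))$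 for $t\in\mathcal{C}$ and $\mathcal{S}_\beta^{\alpha_n}(t)=\beta(\Gamma(t))\ast\alpha_n(k_n(t))$ for $t\in I_n$. *)

theory Defs
  imports "HOL-Analysis.Analysis"
begin

definition pre_delta_monoid :: "('a::topological_space \<Rightarrow> 'a \<Rightarrow> 'a) \<Rightarrow> 'a \<Rightarrow> bool" where
  "pre_delta_monoid mop e \<longleftrightarrow>
     (\<forall>x y z. mop (mop x y) z = mop x (mop y z)) \<and>
     (\<forall>x. mop e x = x \<and> mop x e = x) \<and>
     (\<forall>\<alpha> \<beta>. path \<alpha> \<and> path \<beta> \<longrightarrow> path (\<lambda>t. mop (\<alpha> t) (\<beta> t)))"

definition loop_at :: "'a::topological_space \<Rightarrow> (real \<Rightarrow> 'a) \<Rightarrow> bool" where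
  "loop_at e \<alpha> \<longleftrightarrow> path \<alpha> \<and> pathstart \<alpha> = e \<and> pathfinish \<alpha> = e"

definition null_sequence :: "'a::topological_space \<Rightarrow> (nat \<Rightarrow> real \<Rightarrow> 'a) \<Rightarrow> bool" where
  "null_sequence e \<alpha> \<longleftrightarrow>
     (\<forall>U. open U \<and> e \<in> U \<longrightarrow> (\<forall>\<^sub>F n in sequentially. path_image (\<alpha> n) \<subseteq> U))"

text \<open>Binary digits of n reinterpreted as ternary digits with 1 replaced by 2.\<close>
fun bin_to_tern02 :: "nat \<Rightarrow> nat" where
  "bin_to_tern02 n = (if n = 0 then 0 else 2 * (n mod 2) + 3 * bin_to_tern02 (n div 2))"

definition gap_level :: "nat \<Rightarrow> nat" where
  "gap_level n = (LEAST m. n < 2 ^ m)"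

text \<open>k - 1 where n = 2^(m-1) + k - 1.\<close>
definition gap_pos :: "nat \<Rightarrow> nat" where
  "gap_pos n = n - 2 ^ (gap_level n - 1)"

definition gap_left :: "nat \<Rightarrow> real" where
  "gap_left n = (3 * real (bin_to_tern02 (gap_pos n)) + 1) / 3 ^ gap_level n"

definition gap_right :: "nat \<Rightarrow> real" where
  "gap_right n = (3 * real (bin_to_tern02 (gap_pos n)) + 2) / 3 ^ gap_level n"

text \<open>I_n = I_m^k, open interval of length 3^(-m), for n \<ge> 1.\<close>
definition gap :: "nat \<Rightarrow> real set" where
  "gap n = {gap_left n <..< gap_right n}"

definition cantor_set :: "real set" where
  "cantor_set = {0..1} - (\<Union>n\<in>{1..}. gap n)"

text \<open>Value (2k-1)/2^m of the Cantor function on the closure of I_m^k.\<close>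
definition gap_value :: "nat \<Rightarrow> real" where
  "gap_value n = (2 * real (gap_pos n) + 1) / 2 ^ gap_level n"

definition cantor_fun :: "real \<Rightarrow> real" where
  "cantor_fun t = Sup (insert 0 {gap_value n | n. n \<ge> 1 \<and> gap_left n \<le> t})"

definition gap_param :: "nat \<Rightarrow> real \<Rightarrow> real" where
  "gap_param n t = (t - gap_left n) / (gap_right n - gap_left n)"

definition gap_index :: "real \<Rightarrow> nat" where
  "gap_index t = (THE n. n \<ge> 1 \<and> t \<in> gap n)"

definition transfinite_slide ::
  "('a \<Rightarrow> 'a \<Rightarrow> 'a) \<Rightarrow> (real \<Rightarrow> 'a) \<Rightarrow> (nat \<Rightarrow> real \<Rightarrow> 'a) \<Rightarrow> real \<Rightarrow> 'a" where
  "transfinite_slide mop \<beta> \<alpha> t =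
     (if t \<in> {0..1} - cantor_set
      then mop (\<beta> (cantor_fun t)) (\<alpha> (gap_index t) (gap_param (gap_index t) t))
      else \<beta> (cantor_fun t))"

end

theory Submission
  imports Defs
begin

text \<open>
  On a gap of the Cantor set the slide is the product of \<open>\<beta> \<circ> cantor_fun\<close> with a loop, and
  on the Cantor set it is \<open>\<beta> \<circ> cantor_fun\<close> itself, so it is the pointwise product of
  \<open>\<beta> \<circ> cantor_fun\<close>, which is homotopic to \<open>\<beta>\<close>, with the arrangement of the loops
  \<open>\<alpha> n\<close> on the gaps. Pointwise products of homotopies are homotopies: the pre-\<open>\<Delta>\<close> axiom
  only speaks about paths, but a convergent sequence in a convex set lies on a path.

  It remains to show that the arrangement of a null-sequence of loops on any family of
  disjoint intervals is homotopic to the standard one, with \<open>\<alpha> (k+1)\<close> on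
  \<open>[1 - 1/(k+1), 1 - 1/(k+2)]\<close>; then reordering the loops does not matter. The loops are
  moved one at a time: in the arrangement of the loops after the \<open>k\<close>-th, the first of them
  is slid to the front along a homotopy in the unit square, and its values stay among
  products of two late loops. These homotopies are stacked on the strips
  \<open>[1 - 1/(k+1), 1 - 1/(k+2)]\<close> of the time axis; the stacked map is continuous at time
  \<open>1\<close> because the loops form a null-sequence, so the products of late loops are close to
  \<open>e\<close>.
\<close>


section \<open>Ternary digits, the gaps of the Cantor set and the Cantor function\<close>

declare bin_to_tern02.simps[simp del]

lemma bin_to_tern02_0 [simp]: "bin_to_tern02 0 = 0"
  by (simp add: bin_to_tern02.simps)

lemma bin_to_tern02_rec: "bin_to_tern02 k = 2 * (k mod 2) + 3 * bin_to_tern02 (k div 2)"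
  by (cases "k = 0") (simp_all add: bin_to_tern02.simps)

lemma bin_to_tern02_bit: "b < 2 \<Longrightarrow> bin_to_tern02 b = 2 * b"
  using bin_to_tern02_rec[of b] by simp

lemma bin_to_tern02_div_mod:
  "bin_to_tern02 k = 3^d * bin_to_tern02 (k div 2^d) + bin_to_tern02 (k mod 2^d)"
proof (induction d arbitrary: k)
  case (Suc d)
  define a where "a = k div 2^d"
  have split: "k mod 2^Suc d = 2^d * (a mod 2) + k mod 2^d"
    unfolding a_def power_Suc2 by (rule mod_mult2_eq)
  have "bin_to_tern02 (k mod 2^Suc d) = 3^d * (2 * (a mod 2)) + bin_to_tern02 (k mod 2^d)"
    using Suc.IH[of "k mod 2^Suc d"] split bin_to_tern02_bit[of "a mod 2"] by simp
  moreover have "k div 2^Suc d = a div 2"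
    unfolding a_def power_Suc2 by (rule div_mult2_eq)
  ultimately show ?case
    using Suc.IH[of k] bin_to_tern02_rec[of a] unfolding a_def[symmetric]
    by (simp add: algebra_simps)
qed simp

lemma bin_to_tern02_less_power: "k < 2^d \<Longrightarrow> bin_to_tern02 k + 1 \<le> 3^d"
proof (induction d arbitrary: k)
  case (Suc d)
  then have "bin_to_tern02 (k div 2) + 1 \<le> 3^d" by auto
  then show ?case using bin_to_tern02_rec[of k] by simp
qed simp

lemma bin_to_tern02_gap: "k < k' \<Longrightarrow> bin_to_tern02 k + 2 \<le> bin_to_tern02 k'"
proof (induction k' arbitrary: k rule: less_induct)
  case (less k')
  show ?case
  proof (cases "k div 2 < k' div 2")
    case True
    then have "bin_to_tern02 (k div 2) + 2 \<le> bin_to_tern02 (k' div 2)"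
      using less by simp
    moreover have "k mod 2 \<le> 1" by simp
    ultimately show ?thesis using bin_to_tern02_rec[of k] bin_to_tern02_rec[of k'] by linarith
  next
    case False
    then have q: "k div 2 = k' div 2" using less.prems
      by (meson div_le_mono le_antisym not_less less_imp_le_nat)
    have "k = 2 * (k div 2) + k mod 2" "k' = 2 * (k' div 2) + k' mod 2"
      "k mod 2 < 2" "k' mod 2 < 2" by simp_all
    then have "k mod 2 = 0" "k' mod 2 = 1" using q less.prems by linarith+
    with q show ?thesis using bin_to_tern02_rec[of k] bin_to_tern02_rec[of k'] by simp
  qed
qed

lemma gap_level_bounds:
  assumes "n \<ge> 1"
  shows "1 \<le> gap_level n" "2^(gap_level n - 1) \<le> n" "n < 2^gap_level n"
proof -
  show "n < 2^gap_level n"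
    unfolding gap_level_def by (rule LeastI_ex) (use less_exp in blast)
  then show "1 \<le> gap_level n"
    using assms by (cases "gap_level n") auto
  then have "\<not> n < 2^(gap_level n - 1)"
    unfolding gap_level_def by (intro not_less_Least) simp
  then show "2^(gap_level n - 1) \<le> n" by simp
qed

lemma gap_level_eq:
  assumes "1 \<le> m" "k < 2^(m-1)"
  shows "gap_level (2^(m-1) + k) = m"
  unfolding gap_level_def
proof (rule Least_equality)
  have "(2::nat)^m = 2 * 2^(m-1)"
    using assms(1) by (simp add: power_eq_if)
  then show "2^(m-1) + k < 2^m" using assms by simp
next
  fix y assume "2^(m-1) + k < (2::nat)^y"
  then have "(2::nat)^(m-1) < 2^y" by linarith
  then show "m \<le> y" by simp
qed

lemma gap_pos_eq:
  assumes "1 \<le> m" "k < 2^(m-1)"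
  shows "gap_pos (2^(m-1) + k) = k"
  unfolding gap_pos_def gap_level_eq[OF assms] by simp

lemma gap_pos_less:
  assumes "n \<ge> 1"
  shows "gap_pos n < 2^(gap_level n - 1)"
proof -
  note bounds = gap_level_bounds[OF assms]
  then have "(2::nat)^gap_level n = 2 * 2^(gap_level n - 1)"
    by (cases "gap_level n") simp_all
  with bounds show ?thesis unfolding gap_pos_def by simp
qed

lemma gap_eq_level_pos: "n \<ge> 1 \<Longrightarrow> n = 2^(gap_level n - 1) + gap_pos n"
  using gap_level_bounds[of n] unfolding gap_pos_def by simp

lemma bin_to_tern02_prefix_bounds:
  fixes k d :: nat
  defines "a \<equiv> k div 2^d"
  shows "3 ^ Suc d * real (bin_to_tern02 a) \<le> 3 * real (bin_to_tern02 k) + 1"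
    "3 * real (bin_to_tern02 k) + 2 \<le> 3 ^ Suc d * (real (bin_to_tern02 a) + 1)"
    "2 ^ Suc d * real a < 2 * real k + 1"
    "2 * real k + 1 < 2 ^ Suc d * (real a + 1)"
proof -
  have digits: "bin_to_tern02 k = 3^d * bin_to_tern02 a + bin_to_tern02 (k mod 2^d)"
    using bin_to_tern02_div_mod[of k d] unfolding a_def by simp
  have "bin_to_tern02 (k mod 2^d) + 1 \<le> 3^d"
    by (rule bin_to_tern02_less_power) simp
  then have "real (bin_to_tern02 (k mod 2^d) + 1) \<le> real (3^d)"
    by (simp only: of_nat_le_iff)
  then have low: "real (bin_to_tern02 (k mod 2^d)) + 1 \<le> 3^d" by simp
  have "k = 2^d * a + k mod 2^d" unfolding a_def by simp
  from arg_cong[OF this, of real] have k: "real k = 2^d * real a + real (k mod 2^d)" by (simp only: of_nat_add of_nat_mult of_nat_power of_nat_numeral)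
  have "k mod 2^d + 1 \<le> 2^d" by (simp add: Suc_leI)
  then have "real (k mod 2^d + 1) \<le> real (2^d)"
    by (simp only: of_nat_le_iff)
  then have "real (k mod 2^d) + 1 \<le> 2^d" by simp
  then show "3 ^ Suc d * real (bin_to_tern02 a) \<le> 3 * real (bin_to_tern02 k) + 1"
    "3 * real (bin_to_tern02 k) + 2 \<le> 3 ^ Suc d * (real (bin_to_tern02 a) + 1)"
    "2 ^ Suc d * real a < 2 * real k + 1"
    "2 * real k + 1 < 2 ^ Suc d * (real a + 1)"
    using digits low k by (simp_all add: algebra_simps)
qed

text \<open>The level-\<open>j\<close> cell with index \<open>a\<close> is
  \<open>[bin_to_tern02 a / 3^j, (bin_to_tern02 a + 1) / 3^j]\<close>; the gaps inside it have values in
  \<open>]a / 2^j, (a + 1) / 2^j[\<close>.\<close>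
lemma gap_in_cell:
  assumes "n \<ge> 1" "j < gap_level n"
  defines "a \<equiv> gap_pos n div 2^(gap_level n - Suc j)"
  shows "real (bin_to_tern02 a) / 3^j \<le> gap_left n"
    "gap_right n \<le> (real (bin_to_tern02 a) + 1) / 3^j"
    "real a / 2^j < gap_value n"
    "gap_value n < (real a + 1) / 2^j"
proof -
  define d where "d = gap_level n - Suc j"
  have "gap_level n = Suc d + j" using assms(2) unfolding d_def by simp
  then have p: "(3::real)^gap_level n = 3 ^ Suc d * 3^j" "(2::real)^gap_level n = 2 ^ Suc d * 2^j"
    by (simp_all add: power_add)
  have "a = gap_pos n div 2^d" unfolding a_def d_def ..
  note bounds = bin_to_tern02_prefix_bounds[where k = "gap_pos n" and d = d, folded this]
  show "real (bin_to_tern02 a) / 3^j \<le> gap_left n"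
    using bounds(1) unfolding gap_left_def p by (simp add: field_simps)
  show "gap_right n \<le> (real (bin_to_tern02 a) + 1) / 3^j"
    using mult_right_mono[OF bounds(2), of "3^j"] unfolding gap_right_def p by (simp add: field_simps)
  show "real a / 2^j < gap_value n"
    using bounds(3) unfolding gap_value_def p by (simp add: field_simps)
  show "gap_value n < (real a + 1) / 2^j"
    using mult_strict_right_mono[OF bounds(4), of "2^j"] unfolding gap_value_def p by (simp add: field_simps)
qed

lemma cells_separated:
  assumes "i < i'"
  shows "(real (bin_to_tern02 i) + 1) / 3^j < real (bin_to_tern02 i') / 3^j"
    "(real i + 1) / 2^j \<le> real i' / 2^j"
  using bin_to_tern02_gap[OF assms] assms by (simp_all add: divide_strict_right_mono divide_right_mono)

text \<open>The two level-\<open>m\<close> cells inside the parent cell of a level-\<open>m\<close> gap lie on either side of it.\<close>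
lemma child_cell_beside_gap:
  assumes "a div 2 = gap_pos n"
  defines "m \<equiv> gap_level n"
  shows "(real (bin_to_tern02 a) + 1) / 3^m \<le> gap_left n \<and> (real a + 1) / 2^m \<le> gap_value n \<or>
    gap_right n \<le> real (bin_to_tern02 a) / 3^m \<and> gap_value n \<le> real a / 2^m"
proof -
  define k where "k = gap_pos n"
  have a: "bin_to_tern02 a = 2 * (a mod 2) + 3 * bin_to_tern02 k" "a = 2 * k + a mod 2"
    using assms(1) bin_to_tern02_rec[of a] div_mult_mod_eq[of a 2] unfolding k_def by simp_all
  have gap_n: "gap_left n = (3 * real (bin_to_tern02 k) + 1) / 3^m"
      "gap_right n = (3 * real (bin_to_tern02 k) + 2) / 3^m"
      "gap_value n = (2 * real k + 1) / 2^m"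
    unfolding gap_left_def gap_right_def gap_value_def m_def k_def by simp_all
  show ?thesis
  proof (cases "a mod 2 = 0")
    case True
    then have "real (bin_to_tern02 a) = 3 * real (bin_to_tern02 k)" "real a = 2 * real k"
      using a by simp_all
    then show ?thesis using gap_n by simp
  next
    case False
    then have "real (bin_to_tern02 a) = 3 * real (bin_to_tern02 k) + 2" "real a = 2 * real k + 1"
      using a by simp_all
    then show ?thesis using gap_n by simp
  qed
qed

text \<open>Compare the cells containing both gaps one level above gap \<open>n\<close>: distinct cells of a
  level are separated, and if the cells coincide then gap \<open>n'\<close> lies in a child of that cell.\<close>
lemma gaps_ordered_by_level:
  assumes n: "n \<ge> 1" and n': "n' \<ge> 1" and lv: "gap_level n \<le> gap_level n'" and ne: "n \<noteq> n'"
  shows "(gap_right n \<le> gap_left n' \<and> gap_value n < gap_value n') \<or>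
         (gap_right n' \<le> gap_left n \<and> gap_value n' < gap_value n)"
proof -
  define m where "m = gap_level n"
  define k where "k = gap_pos n"
  define d where "d = gap_level n' - m"
  define q where "q = gap_pos n' div 2^d"
  have m: "1 \<le> m" using gap_level_bounds[OF n] unfolding m_def by simp
  have "gap_level n' - Suc (m - 1) = d" using m unfolding d_def by simp
  then have outer: "real (bin_to_tern02 q) / 3^(m-1) \<le> gap_left n'"
      "gap_right n' \<le> (real (bin_to_tern02 q) + 1) / 3^(m-1)"
      "real q / 2^(m-1) < gap_value n'" "gap_value n' < (real q + 1) / 2^(m-1)"
    using gap_in_cell[OF n', of "m - 1"] m lv unfolding q_def m_def by simp_all
  have inner: "real (bin_to_tern02 k) / 3^(m-1) \<le> gap_left n"
      "gap_right n \<le> (real (bin_to_tern02 k) + 1) / 3^(m-1)"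
      "real k / 2^(m-1) < gap_value n" "gap_value n < (real k + 1) / 2^(m-1)"
    using gap_in_cell[OF n, of "m - 1"] m unfolding k_def m_def by simp_all
  consider "q < k" | "k < q" | "q = k" by linarith
  then show ?thesis
  proof cases
    case 1 then show ?thesis using cells_separated[of q k "m - 1"] inner outer by linarith
  next
    case 2 then show ?thesis using cells_separated[of k q "m - 1"] inner outer by linarith
  next
    case 3
    have "d \<noteq> 0"
    proof
      assume "d = 0"
      then have "gap_level n' = m" "gap_pos n' = k" using lv 3 unfolding d_def m_def q_def by simp_all
      then show False using ne gap_eq_level_pos[OF n] gap_eq_level_pos[OF n'] unfolding m_def k_def by metis
    qed
    define a where "a = gap_pos n' div 2^(d - 1)"
    have "gap_level n' - Suc m = d - 1" "m < gap_level n'"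
      using \<open>d \<noteq> 0\<close> unfolding d_def by simp_all
    then have child: "real (bin_to_tern02 a) / 3^m \<le> gap_left n'"
        "gap_right n' \<le> (real (bin_to_tern02 a) + 1) / 3^m"
        "real a / 2^m < gap_value n'" "gap_value n' < (real a + 1) / 2^m"
      using gap_in_cell[OF n', of m] unfolding a_def by simp_all
    have "a div 2 = gap_pos n' div (2^(d-1) * 2)" unfolding a_def by (simp add: div_mult2_eq)
    also have "2^(d-1) * 2 = (2::nat)^d" using \<open>d \<noteq> 0\<close> by (simp add: power_eq_if)
    finally have "a div 2 = gap_pos n" using 3 q_def k_def by simp
    then show ?thesis
      using child_cell_beside_gap[of a n] child unfolding m_def by linarith
  qed
qed

lemma gaps_ordered:
  assumes "n \<ge> 1" "n' \<ge> 1" "n \<noteq> n'"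
  shows "(gap_right n \<le> gap_left n' \<and> gap_value n < gap_value n') \<or>
         (gap_right n' \<le> gap_left n \<and> gap_value n' < gap_value n)"
  using gaps_ordered_by_level[OF assms(1,2) _ assms(3)]
    gaps_ordered_by_level[OF assms(2,1) _ assms(3)[symmetric]]
  by linarith

lemma gap_bounds:
  assumes "n \<ge> 1"
  shows "0 < gap_left n" "gap_left n < gap_right n" "gap_right n < 1"
proof -
  have "bin_to_tern02 (gap_pos n) + 1 \<le> 3^(gap_level n - 1)"
    using bin_to_tern02_less_power gap_pos_less[OF assms] by blast
  then have "real (bin_to_tern02 (gap_pos n) + 1) \<le> real (3^(gap_level n - 1))"
    by (simp only: of_nat_le_iff)
  moreover have "(3::real)^gap_level n = 3 * 3^(gap_level n - 1)"
    using gap_level_bounds[OF assms] by (simp add: power_eq_if)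
  ultimately show "gap_right n < 1" unfolding gap_right_def by simp
  show "0 < gap_left n" "gap_left n < gap_right n"
    unfolding gap_left_def gap_right_def by (simp_all add: divide_strict_right_mono)
qed

lemma gap_value_bounds:
  assumes "n \<ge> 1"
  shows "0 < gap_value n" "gap_value n < 1"
proof -
  have "gap_pos n div 2^(gap_level n - 1) = 0" using gap_pos_less[OF assms] by simp
  then show "0 < gap_value n" "gap_value n < 1"
    using gap_in_cell[OF assms, of 0] gap_level_bounds[OF assms] by simp_all
qed

lemma mono_dense_range_right:
  fixes f :: "real \<Rightarrow> real"
  assumes mono: "mono f" and range: "\<And>t. f t \<in> {0..1}"
    and dense: "\<And>a b. 0 \<le> a \<Longrightarrow> a < b \<Longrightarrow> b \<le> 1 \<Longrightarrow> \<exists>x. a < f x \<and> f x < b"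
    and "0 < e"
  shows "\<exists>d>0. \<forall>t'. t' < t + d \<longrightarrow> f t' < f t + e"
proof (cases "f t < 1")
  case True
  then obtain x where x: "f t < f x" "f x < f t + e"
    using dense[of "f t" "min 1 (f t + e)"] range[of t] \<open>0 < e\<close> by auto
  have "t < x" using x(1) monoD[OF mono, of x t] by (cases "t < x") auto
  moreover have "f t' < f t + e" if "t' < t + (x - t)" for t'
    using monoD[OF mono, of t' x] that x(2) by simp
  ultimately show ?thesis by (intro exI[of _ "x - t"]) simp
next
  case False
  then have "f t' < f t + e" for t' using range[of t] range[of t'] \<open>0 < e\<close> by simp
  then show ?thesis by (intro exI[of _ 1]) simp
qed

lemma mono_dense_range_left:
  fixes f :: "real \<Rightarrow> real"
  assumes mono: "mono f" and range: "\<And>t. f t \<in> {0..1}"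
    and dense: "\<And>a b. 0 \<le> a \<Longrightarrow> a < b \<Longrightarrow> b \<le> 1 \<Longrightarrow> \<exists>x. a < f x \<and> f x < b"
    and "0 < e"
  shows "\<exists>d>0. \<forall>t'. t - d < t' \<longrightarrow> f t - e < f t'"
proof (cases "0 < f t")
  case True
  then obtain x where x: "f t - e < f x" "f x < f t"
    using dense[of "max 0 (f t - e)" "f t"] range[of t] \<open>0 < e\<close> by auto
  have "x < t" using x(2) monoD[OF mono, of t x] by (cases "x < t") auto
  moreover have "f t - e < f t'" if "t - (t - x) < t'" for t'
    using monoD[OF mono, of x t'] that x(1) by simp
  ultimately show ?thesis by (intro exI[of _ "t - x"]) simp
next
  case False
  then have "f t - e < f t'" for t' using range[of t] range[of t'] \<open>0 < e\<close> by simp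
  then show ?thesis by (intro exI[of _ 1]) simp
qed

lemma continuous_on_mono_dense_range:
  fixes f :: "real \<Rightarrow> real"
  assumes "mono f" and "\<And>t. f t \<in> {0..1}"
    and "\<And>a b. 0 \<le> a \<Longrightarrow> a < b \<Longrightarrow> b \<le> 1 \<Longrightarrow> \<exists>x. a < f x \<and> f x < b"
  shows "continuous_on UNIV f"
  unfolding continuous_on_iff
proof (intro ballI allI impI)
  fix t e :: real assume "0 < e"
  obtain d1 where d1: "d1 > 0" "\<And>t'. t' < t + d1 \<Longrightarrow> f t' < f t + e"
    using mono_dense_range_right[OF assms \<open>0 < e\<close>] by blast
  obtain d2 where d2: "d2 > 0" "\<And>t'. t - d2 < t' \<Longrightarrow> f t - e < f t'"
    using mono_dense_range_left[OF assms \<open>0 < e\<close>] by blast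
  show "\<exists>d>0. \<forall>t'\<in>UNIV. dist t' t < d \<longrightarrow> dist (f t') (f t) < e"
  proof (intro exI[of _ "min d1 d2"] conjI ballI impI)
    fix t' assume "dist t' t < min d1 d2"
    then show "dist (f t') (f t) < e"
      using d1(2)[of t'] d2(2)[of t'] by (auto simp: dist_real_def abs_less_iff)
  qed (use d1 d2 in simp)
qed

lemma gap_value_le_1: "n \<ge> 1 \<Longrightarrow> gap_value n \<le> 1"
  using gap_value_bounds(2)[of n] by linarith

lemma cantor_fun_upper:
  assumes "n \<ge> 1" "gap_left n \<le> t"
  shows "gap_value n \<le> cantor_fun t"
  unfolding cantor_fun_def
proof (rule cSup_upper)
  show "bdd_above (insert 0 {gap_value n | n. n \<ge> 1 \<and> gap_left n \<le> t})"
    using gap_value_le_1 by (intro bdd_aboveI[of _ 1]) force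
qed (use assms in blast)

lemma cantor_fun_least:
  assumes "0 \<le> c" "\<And>n. n \<ge> 1 \<Longrightarrow> gap_left n \<le> t \<Longrightarrow> gap_value n \<le> c"
  shows "cantor_fun t \<le> c"
  unfolding cantor_fun_def by (rule cSup_least) (use assms in auto)

lemma cantor_fun_nonneg: "0 \<le> cantor_fun t"
  unfolding cantor_fun_def
  by (rule cSup_upper) (use gap_value_le_1 in \<open>auto intro!: bdd_aboveI[of _ 1]\<close>)

lemma cantor_fun_le_1: "cantor_fun t \<le> 1"
  by (rule cantor_fun_least) (simp_all add: gap_value_le_1)

lemma mono_cantor_fun: "mono cantor_fun"
  by (intro monoI cantor_fun_least cantor_fun_nonneg cantor_fun_upper) auto

lemma cantor_fun_on_gap:
  assumes "n \<ge> 1" "gap_left n \<le> t" "t < gap_right n"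
  shows "cantor_fun t = gap_value n"
proof (rule antisym)
  show "cantor_fun t \<le> gap_value n"
  proof (rule cantor_fun_least)
    fix n' assume "n' \<ge> 1" "gap_left n' \<le> t"
    then show "gap_value n' \<le> gap_value n"
      using gaps_ordered[OF assms(1) \<open>n' \<ge> 1\<close>] assms by (cases "n' = n") auto
  qed (use gap_value_bounds[OF assms(1)] in simp)
qed (rule cantor_fun_upper[OF assms(1,2)])

lemma cantor_fun_0: "cantor_fun 0 = 0"
  using gap_bounds(1) cantor_fun_nonneg
  by (intro antisym cantor_fun_least) (auto simp: not_le[symmetric])

text \<open>Every \<open>w / 2^m\<close> with \<open>w < 2^m\<close> odd is the value on a gap of level \<open>m\<close>.\<close>
lemma gap_values_dense:
  assumes "0 \<le> a" "a < b" "b \<le> 1"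
  obtains n where "n \<ge> 1" "a < gap_value n" "gap_value n < b"
proof -
  obtain m0 where m0: "(1/2::real)^m0 < (b - a) / 2"
    using real_arch_pow_inv[of "(b - a) / 2" "1/2"] assms by auto
  define m where "m = Suc m0"
  define P where "P = (2::real)^m"
  have "(1/2::real)^m \<le> (1/2)^m0" unfolding m_def by (simp add: power_decreasing)
  then have "(1/2::real)^m < (b - a) / 2" using m0 by (rule le_less_trans)
  then have "2 / P < b - a" unfolding P_def by (simp add: power_one_over divide_simps)
  then have step: "a * P + 2 < b * P" unfolding P_def by (simp add: field_simps)
  define j where "j = nat \<lfloor>a * P\<rfloor>"
  have j: "real j \<le> a * P" "a * P < real j + 1"
    unfolding j_def using assms by (simp_all add: P_def of_nat_nat)
  define w where "w = (if even j then j + 1 else j + 2)"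
  have "odd w" and w: "a * P < real w" "real w < b * P"
    using j step unfolding w_def by auto
  define k where "k = w div 2"
  have wk: "w = 2 * k + 1" unfolding k_def using \<open>odd w\<close> by simp
  have "b * P \<le> P" using assms by (simp add: P_def)
  then have "real w < P" using w by linarith
  then have "w < 2^m" unfolding P_def by (metis of_nat_less_iff of_nat_numeral of_nat_power)
  then have "w < 2 * 2^(m-1)" unfolding m_def by simp
  then have k: "k < 2^(m-1)" using wk by linarith
  define n where "n = 2^(m-1) + k"
  have m1: "1 \<le> m" unfolding m_def by simp
  have v: "gap_value n = real w / P"
    unfolding gap_value_def n_def P_def gap_level_eq[OF m1 k] gap_pos_eq[OF m1 k] wk by simp
  have "P > 0" unfolding P_def by simp
  then have "a < gap_value n" "gap_value n < b"
    unfolding v using w by (simp_all add: field_simps)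
  moreover have "n \<ge> 1" unfolding n_def by (simp add: Suc_leI)
  ultimately show ?thesis using that by blast
qed

lemma cantor_fun_1: "cantor_fun 1 = 1"
proof (rule antisym[OF cantor_fun_le_1], rule field_le_epsilon)
  fix e :: real assume "0 < e"
  show "1 \<le> cantor_fun 1 + e"
  proof (cases "e \<ge> 1")
    case True then show ?thesis using cantor_fun_nonneg[of 1] by simp
  next
    case False
    then obtain n where "n \<ge> 1" "1 - e < gap_value n"
      using gap_values_dense[of "1 - e" 1] \<open>0 < e\<close> by auto
    then show ?thesis
      using cantor_fun_upper[of n 1] gap_bounds[of n] by simp
  qed
qed

lemma continuous_cantor_fun: "continuous_on UNIV cantor_fun"
proof (rule continuous_on_mono_dense_range[OF mono_cantor_fun])
  fix a b :: real assume "0 \<le> a" "a < b" "b \<le> 1"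
  then obtain n where n: "n \<ge> 1" "a < gap_value n" "gap_value n < b"
    by (rule gap_values_dense)
  then show "\<exists>x. a < cantor_fun x \<and> cantor_fun x < b"
    using cantor_fun_on_gap[OF n(1) order_refl gap_bounds(2)[OF n(1)]] by metis
qed (simp add: cantor_fun_nonneg cantor_fun_le_1)

section \<open>Loops arranged on disjoint intervals\<close>

definition interval_param :: "real \<Rightarrow> real \<Rightarrow> real \<Rightarrow> real" where
  "interval_param a b t = max 0 (min 1 ((t - a) / (b - a)))"

lemma continuous_on_interval_param: "continuous_on S (interval_param a b)"
  unfolding interval_param_def divide_inverse by (intro continuous_intros)

lemma interval_param_range: "0 \<le> interval_param a b t" "interval_param a b t \<le> 1"
  unfolding interval_param_def by auto

lemma interval_param_left: "a < b \<Longrightarrow> t \<le> a \<Longrightarrow> interval_param a b t = 0"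
  unfolding interval_param_def by (auto simp: divide_le_0_iff)

lemma interval_param_right: "a < b \<Longrightarrow> b \<le> t \<Longrightarrow> interval_param a b t = 1"
  unfolding interval_param_def by (auto simp: le_divide_eq)

lemma interval_param_eq: "a < b \<Longrightarrow> a \<le> t \<Longrightarrow> t \<le> b \<Longrightarrow> interval_param a b t = (t - a) / (b - a)"
  unfolding interval_param_def by (auto simp: divide_le_eq le_divide_eq)

definition disjoint_intervals :: "(nat \<Rightarrow> real) \<Rightarrow> (nat \<Rightarrow> real) \<Rightarrow> bool" where
  "disjoint_intervals l r \<longleftrightarrow> (\<forall>n\<ge>1. 0 \<le> l n \<and> l n < r n \<and> r n \<le> 1) \<and>
     (\<forall>n\<ge>1. \<forall>m\<ge>1. n \<noteq> m \<longrightarrow> r n \<le> l m \<or> r m \<le> l n)"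

definition interval_index :: "(nat \<Rightarrow> real) \<Rightarrow> (nat \<Rightarrow> real) \<Rightarrow> real \<Rightarrow> nat" where
  "interval_index l r t = (THE n. n \<ge> 1 \<and> l n < t \<and> t < r n)"

definition arrangement ::
  "'a \<Rightarrow> (nat \<Rightarrow> real) \<Rightarrow> (nat \<Rightarrow> real) \<Rightarrow> (nat \<Rightarrow> real \<Rightarrow> 'a) \<Rightarrow> real \<Rightarrow> 'a" where
  "arrangement e l r \<alpha> t =
     (if \<exists>n\<ge>1. l n < t \<and> t < r n
      then \<alpha> (interval_index l r t)
             ((t - l (interval_index l r t)) / (r (interval_index l r t) - l (interval_index l r t)))
      else e)"

lemma disjoint_intervalsD:
  assumes "disjoint_intervals l r" "n \<ge> 1"
  shows "0 \<le> l n" "l n < r n" "r n \<le> 1"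
  using assms unfolding disjoint_intervals_def by auto

lemma disjoint_intervals_apart:
  assumes "disjoint_intervals l r" "n \<ge> 1" "m \<ge> 1" "n \<noteq> m"
  shows "r n \<le> l m \<or> r m \<le> l n"
  using assms unfolding disjoint_intervals_def by auto

lemma interval_index_eq:
  assumes "disjoint_intervals l r" "n \<ge> 1" "l n < t" "t < r n"
  shows "interval_index l r t = n"
  unfolding interval_index_def
proof (rule the_equality)
  fix m assume m: "m \<ge> 1 \<and> l m < t \<and> t < r m"
  show "m = n"
    using disjoint_intervals_apart[OF assms(1), of m n] m assms by fastforce
qed (use assms in simp)

lemma arrangement_inside:
  assumes "disjoint_intervals l r" "n \<ge> 1" "l n < t" "t < r n"
  shows "arrangement e l r \<alpha> t = \<alpha> n (interval_param (l n) (r n) t)"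
  using assms interval_index_eq[OF assms] interval_param_eq[of "l n" "r n" t]
  unfolding arrangement_def by auto

lemma arrangement_outside:
  "\<not> (\<exists>n\<ge>1. l n < t \<and> t < r n) \<Longrightarrow> arrangement e l r \<alpha> t = e"
  unfolding arrangement_def by auto

lemma arrangement_values:
  assumes "disjoint_intervals l r"
  shows "arrangement e l r \<alpha> t = e \<or> (\<exists>n\<ge>1. \<exists>u\<in>{0..1}. arrangement e l r \<alpha> t = \<alpha> n u)"
  using arrangement_inside[OF assms] arrangement_outside interval_param_range
  by (metis atLeastAtMost_iff)

lemma loop_at_param:
  assumes "loop_at e \<gamma>" "a < b" "\<not> (a < t \<and> t < b)"
  shows "\<gamma> (interval_param a b t) = e"
  using assms interval_param_left interval_param_right
  unfolding loop_at_def pathstart_def pathfinish_def by (metis not_le)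

lemma continuous_on_loop_param:
  "loop_at e \<gamma> \<Longrightarrow> continuous_on S (\<lambda>s. \<gamma> (interval_param a b s))"
  unfolding loop_at_def path_def
  by (intro continuous_on_compose2[OF _ continuous_on_interval_param]) (auto simp: interval_param_range)

lemma arrangement_on_closure:
  assumes iv: "disjoint_intervals l r" and loops: "\<forall>n\<ge>1. loop_at e (\<alpha> n)"
    and n: "n \<ge> 1" "l n \<le> t" "t \<le> r n"
  shows "arrangement e l r \<alpha> t = \<alpha> n (interval_param (l n) (r n) t)"
proof (cases "l n < t \<and> t < r n")
  case False
  have "\<not> (l m < t \<and> t < r m)" if "m \<ge> 1" for m
    using disjoint_intervals_apart[OF iv that n(1)] False n by (cases "m = n") auto
  then show ?thesis
    using arrangement_outside loop_at_param[OF _ disjoint_intervalsD(2)[OF iv n(1)] False] loops n(1)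
    by metis
qed (use arrangement_inside[OF iv n(1)] in auto)

lemma arrangement_near_uncovered_point:
  fixes \<alpha> :: "nat \<Rightarrow> real \<Rightarrow> 'a::topological_space"
  assumes iv: "disjoint_intervals l r" and loops: "\<forall>n\<ge>1. loop_at e (\<alpha> n)"
    and null: "null_sequence e \<alpha>"
    and t: "\<not> (\<exists>n\<ge>1. l n < t \<and> t < r n)" and B: "open B" "e \<in> B"
  shows "\<forall>\<^sub>F y in nhds t. arrangement e l r \<alpha> y \<in> B"
proof -
  obtain N where N: "\<And>n. n \<ge> N \<Longrightarrow> path_image (\<alpha> n) \<subseteq> B"
    using null B unfolding null_sequence_def eventually_sequentially by blast
  have "\<forall>\<^sub>F y in nhds t. \<alpha> n (interval_param (l n) (r n) y) \<in> B" if "n \<in> {1..<N}" for n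
  proof -
    from that have n: "n \<ge> 1" by simp
    have cont: "continuous_on UNIV (\<lambda>y. \<alpha> n (interval_param (l n) (r n) y))"
      by (rule continuous_on_loop_param[of e]) (use loops n in simp)
    have "\<not> (l n < t \<and> t < r n)" using t n by blast
    then have "\<alpha> n (interval_param (l n) (r n) t) \<in> B"
      using loop_at_param[OF _ disjoint_intervalsD(2)[OF iv n]] loops n B(2) by auto
    then show ?thesis
      using continuous_on_topological[THEN iffD1, OF cont, rule_format, OF UNIV_I B(1)]
      unfolding eventually_nhds by fastforce
  qed
  then have "\<forall>\<^sub>F y in nhds t. \<forall>n\<in>{1..<N}. \<alpha> n (interval_param (l n) (r n) y) \<in> B"
    by (intro eventually_ball_finite) auto
  then show ?thesis
  proof eventually_elim
    case (elim y)
    show ?case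
    proof (cases "\<exists>n\<ge>1. l n < y \<and> y < r n")
      case True
      then obtain n where n: "n \<ge> 1" "l n < y" "y < r n" by blast
      have "\<alpha> n (interval_param (l n) (r n) y) \<in> path_image (\<alpha> n)"
        unfolding path_image_def using interval_param_range by simp
      then have "\<alpha> n (interval_param (l n) (r n) y) \<in> B"
        using elim N[of n] n(1) by (cases "n < N") auto
      then show ?thesis using arrangement_inside[OF iv n, where e=e and \<alpha>=\<alpha>] by simp
    qed (simp add: arrangement_outside B(2))
  qed
qed

lemma path_arrangement:
  fixes \<alpha> :: "nat \<Rightarrow> real \<Rightarrow> 'a::topological_space"
  assumes iv: "disjoint_intervals l r" and loops: "\<forall>n\<ge>1. loop_at e (\<alpha> n)"
    and null: "null_sequence e \<alpha>"
  shows "path (arrangement e l r \<alpha>)"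
  unfolding path_def continuous_on_topological
proof (intro ballI allI impI)
  fix t B assume B: "open B" "arrangement e l r \<alpha> t \<in> B"
  show "\<exists>A. open A \<and> t \<in> A \<and> (\<forall>y\<in>{0..1}. y \<in> A \<longrightarrow> arrangement e l r \<alpha> y \<in> B)"
  proof (cases "\<exists>n\<ge>1. l n < t \<and> t < r n")
    case True
    then obtain n where n: "n \<ge> 1" "l n < t" "t < r n" by blast
    have "continuous_on UNIV (\<lambda>s. \<alpha> n (interval_param (l n) (r n) s))"
      by (rule continuous_on_loop_param[of e]) (use loops n(1) in simp)
    moreover have "\<alpha> n (interval_param (l n) (r n) t) \<in> B"
      using arrangement_inside[OF iv n, where e=e and \<alpha>=\<alpha>] B(2) by simp
    ultimately obtain A where "open A" "t \<in> A" "\<forall>y\<in>A. \<alpha> n (interval_param (l n) (r n) y) \<in> B"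
      using continuous_on_topological[THEN iffD1, rule_format, OF _ UNIV_I B(1)] by force
    then show ?thesis
      using n by (intro exI[of _ "A \<inter> {l n<..<r n}"]) (auto simp: arrangement_inside[OF iv n(1)])
  next
    case False
    then have "e \<in> B" using B(2) arrangement_outside by metis
    then show ?thesis
      using arrangement_near_uncovered_point[OF iv loops null False B(1)]
      unfolding eventually_nhds by blast
  qed
qed

lemma disjoint_intervals_reindex:
  assumes "disjoint_intervals l r" "bij_betw \<psi> {1..} {1..}"
  shows "disjoint_intervals (\<lambda>n. l (\<psi> n)) (\<lambda>n. r (\<psi> n))"
proof -
  have "\<psi> n \<ge> 1" "\<psi> n \<noteq> \<psi> m" if "n \<ge> 1" "m \<ge> 1" "n \<noteq> m" for n m
    using that bij_betw_imp_inj_on[OF assms(2)] bij_betwE[OF assms(2)] unfolding inj_on_def by auto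
  then show ?thesis
    using assms(1) unfolding disjoint_intervals_def by (metis atLeast_iff bij_betwE[OF assms(2)])
qed

lemma arrangement_reindex:
  assumes iv: "disjoint_intervals l r" and \<phi>: "bij_betw \<phi> {1..} {1..}"
  defines "\<psi> \<equiv> inv_into {1..} \<phi>"
  shows "arrangement e l r (\<lambda>n. \<alpha> (\<phi> n)) = arrangement e (\<lambda>n. l (\<psi> n)) (\<lambda>n. r (\<psi> n)) \<alpha>"
proof
  fix t
  have \<psi>: "bij_betw \<psi> {1..} {1..}" unfolding \<psi>_def by (rule bij_betw_inv_into[OF \<phi>])
  have \<psi>\<phi>: "\<psi> (\<phi> n) = n" "\<phi> n \<ge> 1" if "n \<ge> 1" for n
    using that bij_betw_inv_into_left[OF \<phi>] bij_betwE[OF \<phi>] unfolding \<psi>_def by auto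
  show "arrangement e l r (\<lambda>n. \<alpha> (\<phi> n)) t = arrangement e (\<lambda>n. l (\<psi> n)) (\<lambda>n. r (\<psi> n)) \<alpha> t"
  proof (cases "\<exists>n\<ge>1. l n < t \<and> t < r n")
    case True
    then obtain n where n: "n \<ge> 1" "l n < t" "t < r n" by blast
    then have "\<phi> n \<ge> 1" "l (\<psi> (\<phi> n)) < t" "t < r (\<psi> (\<phi> n))" using \<psi>\<phi> by auto
    from arrangement_inside[OF disjoint_intervals_reindex[OF iv \<psi>] this, where e=e and \<alpha>=\<alpha>]
    show ?thesis
      using arrangement_inside[OF iv n, where e=e and \<alpha>="\<lambda>n. \<alpha> (\<phi> n)"] \<psi>\<phi>(1)[OF n(1)] by simp
  next
    case False
    moreover have "\<psi> n \<ge> 1" if "n \<ge> 1" for n using bij_betwE[OF \<psi>] that by auto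
    ultimately have "\<not> (\<exists>n\<ge>1. l (\<psi> n) < t \<and> t < r (\<psi> n))" by blast
    with False show ?thesis by (simp add: arrangement_outside)
  qed
qed

section \<open>The harmonic knots\<close>

definition knot :: "nat \<Rightarrow> real" where
  "knot n = 1 - 1 / real (Suc n)"

definition knot_index :: "real \<Rightarrow> nat" where
  "knot_index s = nat \<lfloor>1 / (1 - s)\<rfloor> - 1"

lemma knot_0 [simp]: "knot 0 = 0"
  unfolding knot_def by simp

lemma knot_less_1: "knot n < 1"
  unfolding knot_def by simp

lemma knot_nonneg: "0 \<le> knot n"
  unfolding knot_def by (simp add: field_simps)

lemma knot_Suc_pos [simp]: "0 < knot (Suc n)"
  unfolding knot_def by simp

lemma knot_less_iff [simp]: "knot m < knot n \<longleftrightarrow> m < n"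
  unfolding knot_def by (simp add: field_simps)

lemma knot_le_iff [simp]: "knot m \<le> knot n \<longleftrightarrow> m \<le> n"
  unfolding knot_def by (simp add: field_simps)

lemma knot_Suc_diff: "knot (Suc n) - knot n = 1 / ((real n + 1) * (real n + 2))"
  unfolding knot_def by (simp add: field_simps)

lemma knot_eq: "knot n = 1 - 1 / (real n + 1)"
  unfolding knot_def by simp

lemma LIMSEQ_knot: "knot \<longlonglongrightarrow> 1"
proof -
  have "(\<lambda>n. 1 - inverse (real (Suc n))) \<longlonglongrightarrow> 1 - 0"
    by (intro tendsto_intros LIMSEQ_inverse_real_of_nat)
  then show ?thesis unfolding knot_def by (simp add: inverse_eq_divide)
qed

lemma exists_knot_above: "s < 1 \<Longrightarrow> \<exists>n. s < knot n"
  using order_tendstoD(1)[OF LIMSEQ_knot] eventually_sequentially by (metis order.refl)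

lemma knot_index_eq:
  assumes "knot n \<le> s" "s < knot (Suc n)"
  shows "knot_index s = n"
proof -
  have "s < 1" using assms(2) knot_less_1 by (rule less_trans)
  then have "real (Suc n) \<le> 1 / (1 - s)" "1 / (1 - s) < real (Suc (Suc n))"
    using assms unfolding knot_def by (simp_all add: field_simps)
  then have "\<lfloor>1 / (1 - s)\<rfloor> = int (Suc n)" by (simp add: floor_eq_iff)
  then show ?thesis unfolding knot_index_def by simp
qed

lemma knot_index_bounds:
  assumes "0 \<le> s" "s < 1"
  shows "knot (knot_index s) \<le> s" "s < knot (Suc (knot_index s))"
proof -
  define k where "k = \<lfloor>1 / (1 - s)\<rfloor>"
  have "1 \<le> 1 / (1 - s)" using assms by (simp add: field_simps)
  then have "k \<ge> 1" unfolding k_def by (metis floor_mono floor_one)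
  then have k: "1 + real (knot_index s) = of_int k"
    unfolding knot_index_def k_def[symmetric] by simp
  have "of_int k \<le> 1 / (1 - s)" "1 / (1 - s) < of_int k + 1"
    unfolding k_def by linarith+
  then have "1 - s \<le> 1 / of_int k" "1 / (of_int k + 1) < 1 - s"
    using assms \<open>k \<ge> 1\<close> by (simp_all add: field_simps)
  then show "knot (knot_index s) \<le> s" "s < knot (Suc (knot_index s))"
    unfolding knot_def using k by (simp_all add: add.commute)
qed

lemma knot_index_ge:
  assumes "knot N < s" "s < 1"
  shows "N \<le> knot_index s"
proof (rule ccontr)
  assume "\<not> N \<le> knot_index s"
  then have "knot (Suc (knot_index s)) \<le> knot N" by (simp only: knot_le_iff)
  moreover have "0 \<le> s" using knot_nonneg[of N] assms(1) by linarith
  ultimately show False using knot_index_bounds[OF _ assms(2)] assms(1) by linarith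
qed

definition strip_param :: "nat \<Rightarrow> real \<Rightarrow> real" where
  "strip_param k t = (t - knot k) * ((real k + 1) * (real k + 2))"

definition tail_param :: "nat \<Rightarrow> real \<Rightarrow> real" where
  "tail_param k t = (t - knot k) * (real k + 1)"

lemma strip_param_knot [simp]: "strip_param k (knot k) = 0" "strip_param k (knot (Suc k)) = 1"
  unfolding strip_param_def knot_Suc_diff by simp_all

lemma strip_param_range:
  assumes "knot k \<le> t" "t \<le> knot (Suc k)"
  shows "strip_param k t \<in> {0..1}"
proof -
  have "strip_param k t \<le> strip_param k (knot (Suc k))"
    unfolding strip_param_def using assms by (intro mult_right_mono) auto
  then have "strip_param k t \<le> 1" by simp
  then show ?thesis using assms unfolding strip_param_def by simp
qed

lemma strip_param_eq_interval_param:
  assumes "knot k \<le> t" "t \<le> knot (Suc k)"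
  shows "interval_param (knot k) (knot (Suc k)) t = strip_param k t"
  using assms unfolding interval_param_eq[OF knot_less_iff[THEN iffD2, OF lessI] assms]
    strip_param_def knot_Suc_diff by (simp add: field_simps)

lemma strip_param_eq_tail_param: "strip_param k t = (real k + 2) * tail_param k t"
  unfolding strip_param_def tail_param_def by simp

lemma tail_param_range:
  assumes "knot k \<le> t" "t \<le> 1"
  shows "tail_param k t \<in> {0..1}"
proof -
  have "tail_param k t \<le> (1 - knot k) * (real k + 1)"
    unfolding tail_param_def using assms by (intro mult_right_mono) auto
  also have "\<dots> = 1" unfolding knot_eq by (simp add: field_simps)
  finally show ?thesis using assms unfolding tail_param_def by simp
qed

lemma tail_param_1 [simp]: "tail_param k 1 = 1"
  unfolding tail_param_def knot_eq by (simp add: field_simps)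

lemma tail_param_eq: "tail_param k t = t * (real k + 1) - real k"
  unfolding tail_param_def knot_eq by (simp add: field_simps)

lemma tail_param_Suc: "(tail_param k t * (real k + 2) - 1) / (real k + 1) = tail_param (Suc k) t"
proof -
  have "tail_param k t * (real k + 2) - 1 = (real k + 1) * tail_param (Suc k) t"
    unfolding tail_param_eq by (simp add: algebra_simps)
  then show ?thesis by simp
qed

lemma continuous_on_knot_strips:
  fixes f :: "real \<times> 'b::topological_space \<Rightarrow> 'c::topological_space"
  assumes X: "closed X"
    and strips: "\<And>n. continuous_on ({knot n..knot (Suc n)} \<times> X) f"
    and top: "\<And>x B. x \<in> X \<Longrightarrow> open B \<Longrightarrow> f (1, x) \<in> B \<Longrightarrow>
       \<exists>A N. open A \<and> x \<in> A \<and> (\<forall>s y. knot N < s \<and> s \<le> 1 \<and> y \<in> X \<and> y \<in> A \<longrightarrow> f (s, y) \<in> B)"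
  shows "continuous_on ({0..1} \<times> X) f"
proof -
  have below: "continuous_on ({0..knot N} \<times> X) f" for N
  proof (induction N)
    case (Suc N)
    have "knot N \<le> knot (Suc N)" by simp
    then have "{0..knot (Suc N)} \<times> X = ({0..knot N} \<times> X) \<union> ({knot N..knot (Suc N)} \<times> X)"
      using knot_nonneg[of N] by (auto simp del: knot_le_iff)
    then show ?case
      using continuous_on_closed_Un[OF _ _ Suc strips[of N]] X by (simp add: closed_Times)
  qed (rule continuous_on_subset[OF strips[of 0]], auto simp: knot_nonneg)
  show ?thesis unfolding continuous_on_topological
  proof (intro ballI allI impI)
    fix z B assume z: "z \<in> {0..1} \<times> X" and B: "open B" "f z \<in> B"
    obtain s x where sx: "z = (s, x)" by fastforce
    show "\<exists>A. open A \<and> z \<in> A \<and> (\<forall>y\<in>{0..1} \<times> X. y \<in> A \<longrightarrow> f y \<in> B)"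
    proof (cases "s < 1")
      case True
      obtain N where N: "s < knot N" using exists_knot_above[OF True] by blast
      have "z \<in> {0..knot N} \<times> X" using z N sx by auto
      then obtain A where A: "open A" "z \<in> A" "\<forall>y\<in>{0..knot N} \<times> X. y \<in> A \<longrightarrow> f y \<in> B"
        using continuous_on_topological[THEN iffD1, OF below[of N], rule_format, OF _ B] by blast
      show ?thesis
        using A N sx by (intro exI[of _ "A \<inter> ({..<knot N} \<times> UNIV)"]) (auto intro!: open_Int open_Times)
    next
      case False
      then have "s = 1" using z sx by auto
      then obtain A N where AN: "open A" "x \<in> A"
          "\<forall>s y. knot N < s \<and> s \<le> 1 \<and> y \<in> X \<and> y \<in> A \<longrightarrow> f (s, y) \<in> B"
        using top[of x B] z B sx by auto
      show ?thesis
        using AN \<open>s = 1\<close> sx knot_less_1[of N]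
        by (intro exI[of _ "{knot N<..} \<times> A"]) (auto intro!: open_Times)
    qed
  qed
qed

section \<open>Continuity of the product in a pre-\<open>\<Delta>\<close>-monoid\<close>

definition knot_interpolation :: "(nat \<Rightarrow> 'b::real_vector) \<Rightarrow> 'b \<Rightarrow> real \<Rightarrow> 'b" where
  "knot_interpolation z p t = (if 1 \<le> t then p else
     (1 - strip_param (knot_index t) t) *\<^sub>R z (knot_index t) +
       strip_param (knot_index t) t *\<^sub>R z (Suc (knot_index t)))"

lemma knot_interpolation_strip:
  assumes "knot n \<le> t" "t \<le> knot (Suc n)"
  shows "knot_interpolation z p t = (1 - strip_param n t) *\<^sub>R z n + strip_param n t *\<^sub>R z (Suc n)"
proof (cases "t < knot (Suc n)")
  case True
  then show ?thesis
    unfolding knot_interpolation_def using knot_index_eq[OF assms(1) True] knot_less_1[of "Suc n"] by auto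
next
  case False
  then have t: "t = knot (Suc n)" using assms by simp
  have "knot_index t = Suc n" unfolding t by (rule knot_index_eq) simp_all
  then show ?thesis unfolding knot_interpolation_def using knot_less_1[of "Suc n"] t by simp
qed

lemma knot_interpolation_knot: "knot_interpolation z p (knot n) = z n"
  using knot_interpolation_strip[of n "knot n"] by simp

lemma knot_interpolation_in_segment:
  assumes "0 \<le> t" "t < 1"
  shows "knot_interpolation z p t \<in> closed_segment (z (knot_index t)) (z (Suc (knot_index t)))"
  using knot_interpolation_strip[of "knot_index t" t] knot_index_bounds[OF assms]
    strip_param_range[of "knot_index t" t]
  unfolding closed_segment_def by auto

lemma path_knot_interpolation:
  fixes z :: "nat \<Rightarrow> 'b::real_normed_vector"
  assumes "z \<longlonglongrightarrow> p"
  shows "path (knot_interpolation z p)"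
proof -
  have "continuous_on ({0..1} \<times> {0::real}) (\<lambda>q. knot_interpolation z p (fst q))"
  proof (rule continuous_on_knot_strips)
    fix n
    have "continuous_on ({knot n..knot (Suc n)} \<times> {0::real})
        (\<lambda>q. (1 - strip_param n (fst q)) *\<^sub>R z n + strip_param n (fst q) *\<^sub>R z (Suc n))"
      unfolding strip_param_def by (intro continuous_intros)
    then show "continuous_on ({knot n..knot (Suc n)} \<times> {0::real}) (\<lambda>q. knot_interpolation z p (fst q))"
      by (rule continuous_on_eq) (auto simp: knot_interpolation_strip)
  next
    fix x :: real and B assume B: "open B" "knot_interpolation z p (fst (1, x)) \<in> B"
    then obtain \<epsilon> where \<epsilon>: "\<epsilon> > 0" "ball p \<epsilon> \<subseteq> B"
      unfolding knot_interpolation_def by (auto elim: openE)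
    obtain N where N: "\<And>n. n \<ge> N \<Longrightarrow> dist (z n) p < \<epsilon>"
      using assms \<epsilon>(1) unfolding tendsto_iff eventually_sequentially by blast
    have "knot_interpolation z p s \<in> B" if "knot N < s" "s \<le> 1" for s
    proof (cases "s = 1")
      case False
      then have s: "0 \<le> s" "s < 1" using that knot_nonneg[of N] by auto
      have "N \<le> knot_index s" using knot_index_ge[OF that(1) s(2)] .
      then have "closed_segment (z (knot_index s)) (z (Suc (knot_index s))) \<subseteq> ball p \<epsilon>"
        using N by (intro closed_segment_subset) (auto simp: dist_commute)
      then show ?thesis using knot_interpolation_in_segment[OF s] \<epsilon>(2) by auto
    qed (use B in \<open>simp add: knot_interpolation_def\<close>)
    then show "\<exists>A N. open A \<and> x \<in> A \<and>
        (\<forall>s y. knot N < s \<and> s \<le> 1 \<and> y \<in> {0} \<and> y \<in> A \<longrightarrow> knot_interpolation z p (fst (s, y)) \<in> B)"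
      by (intro exI[of _ UNIV] exI[of _ N]) simp
  qed simp
  then show ?thesis
    unfolding path_def
    by (rule continuous_on_compose2[where f = "\<lambda>t. (t, 0)", of _ "\<lambda>q. knot_interpolation z p (fst q)", simplified])
      (auto intro!: continuous_intros)
qed

lemma path_through_convergent_sequence:
  fixes z :: "nat \<Rightarrow> 'b::real_normed_vector"
  assumes S: "convex S" "\<And>n. z n \<in> S" "p \<in> S" and lim: "z \<longlonglongrightarrow> p"
  obtains c where "path c" "c ` {0..1} \<subseteq> S" "c 1 = p" "\<And>n. c (knot n) = z n"
proof
  show "knot_interpolation z p ` {0..1} \<subseteq> S"
  proof
    fix y assume "y \<in> knot_interpolation z p ` {0..1}"
    then obtain t where t: "t \<in> {0..1}" "y = knot_interpolation z p t" by blast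
    show "y \<in> S"
    proof (cases "t = 1")
      case False
      then show ?thesis
        using knot_interpolation_in_segment[of t z p] closed_segment_subset[OF S(2) S(2) S(1)] t by auto
    qed (use t S in \<open>simp add: knot_interpolation_def\<close>)
  qed
next
  show "knot_interpolation z p (knot n) = z n" for n by (rule knot_interpolation_knot)
qed (simp_all add: path_knot_interpolation[OF lim] knot_interpolation_def)

locale pre_delta =
  fixes mop :: "'a::topological_space \<Rightarrow> 'a \<Rightarrow> 'a" and e :: 'a
  assumes pre_delta_monoid: "pre_delta_monoid mop e"
begin

lemma left_unit [simp]: "mop e x = x"
  using pre_delta_monoid unfolding pre_delta_monoid_def by blast

lemma right_unit [simp]: "mop x e = x"
  using pre_delta_monoid unfolding pre_delta_monoid_def by blast

lemma path_mop: "path \<alpha> \<Longrightarrow> path \<beta> \<Longrightarrow> path (\<lambda>t. mop (\<alpha> t) (\<beta> t))"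
  using pre_delta_monoid unfolding pre_delta_monoid_def by blast

text \<open>Sequential continuity at \<open>a\<close> reduces to continuity along a path through the sequence,
  which is all that the pre-\<open>\<Delta>\<close> axiom provides.\<close>
lemma continuous_on_mop:
  fixes f g :: "'b::real_normed_vector \<Rightarrow> 'a"
  assumes f: "continuous_on S f" and g: "continuous_on S g" and "convex S"
  shows "continuous_on S (\<lambda>q. mop (f q) (g q))"
  unfolding continuous_on_eq_continuous_within continuous_within_sequentially
proof (intro ballI allI impI)
  fix a x assume a: "a \<in> S" and x: "(\<forall>n. x n \<in> S) \<and> x \<longlonglongrightarrow> a"
  then obtain c where c: "path c" "c ` {0..1} \<subseteq> S" "c 1 = a" "\<And>n. c (knot n) = x n"
    using path_through_convergent_sequence[OF \<open>convex S\<close>, of x a] by blast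
  have "path (f \<circ> c)" "path (g \<circ> c)"
    using c(1,2) f g unfolding path_def by (auto intro: continuous_on_compose2)
  then have "path (\<lambda>t. mop (f (c t)) (g (c t)))"
    using path_mop[of "f \<circ> c" "g \<circ> c"] by (simp add: o_def)
  then have "(\<lambda>n. mop (f (c (knot n))) (g (c (knot n)))) \<longlonglongrightarrow> mop (f (c 1)) (g (c 1))"
    unfolding path_def
    by (rule continuous_on_tendsto_compose[OF _ LIMSEQ_knot])
      (simp_all add: knot_nonneg less_imp_le[OF knot_less_1])
  then show "((\<lambda>q. mop (f q) (g q)) \<circ> x) \<longlonglongrightarrow> mop (f a) (g a)"
    using c(3,4) by (simp add: o_def)
qed

end

definition standard_arrangement :: "'a \<Rightarrow> (nat \<Rightarrow> real \<Rightarrow> 'a) \<Rightarrow> real \<Rightarrow> 'a" where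
  "standard_arrangement e \<alpha> = arrangement e (\<lambda>n. knot (n - 1)) knot \<alpha>"

lemma disjoint_intervals_knots: "disjoint_intervals (\<lambda>n. knot (n - 1)) knot"
  unfolding disjoint_intervals_def by (auto simp: knot_nonneg less_imp_le[OF knot_less_1])

lemma standard_arrangement_1: "standard_arrangement e \<alpha> 1 = e"
  unfolding standard_arrangement_def
  by (rule arrangement_outside) (auto simp: not_less less_imp_le[OF knot_less_1])

lemma standard_arrangement_knot: "standard_arrangement e \<alpha> (knot k) = e"
  unfolding standard_arrangement_def by (rule arrangement_outside) auto

lemma standard_arrangement_strip:
  assumes "\<forall>n\<ge>1. loop_at e (\<alpha> n)" "knot k \<le> t" "t \<le> knot (Suc k)"
  shows "standard_arrangement e \<alpha> t = \<alpha> (Suc k) (interval_param (knot k) (knot (Suc k)) t)"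
  using arrangement_on_closure[OF disjoint_intervals_knots assms(1), of "Suc k" t] assms(2,3)
  unfolding standard_arrangement_def by simp

lemma interval_param_midpoint: "a < b \<Longrightarrow> interval_param a b ((a + b) / 2) = 1/2"
  by (subst interval_param_eq) (simp_all add: field_simps)

lemma standard_arrangement_midpoint:
  "standard_arrangement e \<alpha> ((knot n + knot (Suc n)) / 2) = \<alpha> (Suc n) (1/2)"
proof -
  have "knot n < knot (Suc n)" by simp
  then show ?thesis
    unfolding standard_arrangement_def
    by (subst arrangement_inside[OF disjoint_intervals_knots, of "Suc n"])
      (simp_all add: interval_param_midpoint del: knot_less_iff)
qed

lemma path_standard_arrangement:
  "\<forall>n\<ge>1. loop_at e (\<alpha> n) \<Longrightarrow> null_sequence e \<alpha> \<Longrightarrow> path (standard_arrangement e \<alpha>)"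
  unfolding standard_arrangement_def by (rule path_arrangement[OF disjoint_intervals_knots])

text \<open>A reparametrisation of \<open>[0, 1]\<close> fixing the endpoints and passing through \<open>u\<close> at \<open>1/2\<close>.\<close>
definition reparam_via :: "real \<Rightarrow> real \<Rightarrow> real" where
  "reparam_via u v = 2 * u * min v (1/2) + (1 - u) * max 0 (2 * v - 1)"

lemma reparam_via_range:
  assumes "u \<in> {0..1}" "v \<in> {0..1}"
  shows "reparam_via u v \<in> {0..1}"
proof -
  have "u * (2 * min v (1/2)) \<le> u" using assms by (intro mult_left_le) auto
  then have "0 \<le> 2 * u * min v (1/2)" "2 * u * min v (1/2) \<le> u"
    using assms by (auto simp: algebra_simps)
  moreover have "0 \<le> (1 - u) * max 0 (2 * v - 1)" "(1 - u) * max 0 (2 * v - 1) \<le> 1 - u"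
    using assms by (auto intro: mult_left_le)
  ultimately show ?thesis unfolding reparam_via_def by auto
qed

lemma subsequence_reparam_null_loops:
  assumes loops: "\<forall>n\<ge>1. loop_at e (\<alpha> n)" and null: "null_sequence e \<alpha>"
    and M: "\<And>n. n < M n" and U: "\<And>n. U n \<in> {0..1}"
  defines "\<beta> \<equiv> \<lambda>n v. \<alpha> (M n) (reparam_via (U n) v)"
  shows "\<forall>n\<ge>1. loop_at e (\<beta> n)" "null_sequence e \<beta>"
proof -
  have M1: "1 \<le> M n" for n using M[of n] by simp
  have image: "path_image (\<beta> n) \<subseteq> path_image (\<alpha> (M n))" for n
    unfolding path_image_def \<beta>_def using reparam_via_range[OF U] by auto
  show "\<forall>n\<ge>1. loop_at e (\<beta> n)"
  proof (intro allI impI)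
    fix n :: nat
    have "path (\<alpha> (M n))" "\<alpha> (M n) 0 = e" "\<alpha> (M n) 1 = e"
      using loops M1[of n] unfolding loop_at_def pathstart_def pathfinish_def by auto
    moreover have "continuous_on {0..1} (reparam_via (U n))"
      unfolding reparam_via_def by (intro continuous_intros)
    ultimately show "loop_at e (\<beta> n)"
      unfolding loop_at_def path_def pathstart_def pathfinish_def \<beta>_def
      using reparam_via_range[OF U] by (auto simp: reparam_via_def intro: continuous_on_compose2)
  qed
  show "null_sequence e \<beta>"
    unfolding null_sequence_def
  proof (intro allI impI)
    fix W assume "open W \<and> e \<in> W"
    then obtain N where "\<And>n. n \<ge> N \<Longrightarrow> path_image (\<alpha> n) \<subseteq> W"
      using null unfolding null_sequence_def eventually_sequentially by blast
    then show "\<forall>\<^sub>F n in sequentially. path_image (\<beta> n) \<subseteq> W"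
      unfolding eventually_sequentially using image M by (meson less_imp_le order_trans)
  qed
qed

definition tail_products :: "('a \<Rightarrow> 'a \<Rightarrow> 'a) \<Rightarrow> (nat \<Rightarrow> real \<Rightarrow> 'a) \<Rightarrow> nat \<Rightarrow> 'a set" where
  "tail_products mop \<alpha> k =
     {mop (\<alpha> m u) (\<alpha> m' u') | m m' u u'. k < m \<and> k < m' \<and> u \<in> {0..1} \<and> u' \<in> {0..1}}"

lemma tail_products_antimono: "K \<le> k \<Longrightarrow> tail_products mop \<alpha> k \<subseteq> tail_products mop \<alpha> K"
  unfolding tail_products_def by fastforce

context pre_delta
begin

text \<open>The product of two late loops is realised at the midpoints of the standard strips by the
  product of two standard arrangements, a path ending at \<open>e\<close>.\<close>
lemma tendsto_tail_products:
  assumes loops: "\<forall>n\<ge>1. loop_at e (\<alpha> n)" and null: "null_sequence e \<alpha>"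
    and M: "\<And>n. n < M n" "\<And>n. n < M' n" and U: "\<And>n. U n \<in> {0..1}" "\<And>n. U' n \<in> {0..1}"
  shows "(\<lambda>n. mop (\<alpha> (M n) (U n)) (\<alpha> (M' n) (U' n))) \<longlonglongrightarrow> e"
proof -
  define c where "c t = mop (standard_arrangement e (\<lambda>n v. \<alpha> (M n) (reparam_via (U n) v)) t)
    (standard_arrangement e (\<lambda>n v. \<alpha> (M' n) (reparam_via (U' n) v)) t)" for t
  have "path c"
    unfolding c_def
    by (intro path_mop path_standard_arrangement subsequence_reparam_null_loops[OF loops null] M U)
  define \<mu> where "\<mu> n = (knot n + knot (Suc n)) / 2" for n
  have "\<mu> \<longlonglongrightarrow> (1 + 1) / 2"
    unfolding \<mu>_def by (intro tendsto_intros LIMSEQ_knot LIMSEQ_Suc[OF LIMSEQ_knot]) simp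
  moreover have "\<mu> n \<in> {0..1}" for n
    using knot_nonneg[of n] knot_nonneg[of "Suc n"] knot_less_1[of n] knot_less_1[of "Suc n"]
    unfolding \<mu>_def by auto
  ultimately have "(\<lambda>n. c (\<mu> n)) \<longlonglongrightarrow> c 1"
    using continuous_on_tendsto_compose[OF \<open>path c\<close>[unfolded path_def], of \<mu> 1] by simp
  moreover have "c 1 = e" "c (\<mu> n) = mop (\<alpha> (M (Suc n)) (U (Suc n))) (\<alpha> (M' (Suc n)) (U' (Suc n)))" for n
    unfolding c_def \<mu>_def standard_arrangement_1 standard_arrangement_midpoint reparam_via_def
    by simp_all
  ultimately have "(\<lambda>n. mop (\<alpha> (M (Suc n)) (U (Suc n))) (\<alpha> (M' (Suc n)) (U' (Suc n)))) \<longlonglongrightarrow> e"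
    by simp
  then show ?thesis by (rule filterlim_sequentially_Suc[THEN iffD1])
qed

lemma eventually_tail_products_subset:
  assumes loops: "\<forall>n\<ge>1. loop_at e (\<alpha> n)" and null: "null_sequence e \<alpha>"
    and W: "open W" "e \<in> W"
  shows "\<forall>\<^sub>F k in sequentially. tail_products mop \<alpha> k \<subseteq> W"
proof (rule ccontr)
  assume not_eventually: "\<not> ?thesis"
  have escape: "\<not> tail_products mop \<alpha> K \<subseteq> W" for K
  proof
    assume "tail_products mop \<alpha> K \<subseteq> W"
    then have "\<forall>k\<ge>K. tail_products mop \<alpha> k \<subseteq> W"
      using tail_products_antimono[of K] by (meson subset_trans)
    with not_eventually show False unfolding eventually_sequentially by blast
  qed
  have "\<forall>K. \<exists>m m' u u'. K < m \<and> K < m' \<and> u \<in> {0..1} \<and> u' \<in> {0..1} \<and>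
      mop (\<alpha> m u) (\<alpha> m' u') \<notin> W"
  proof
    fix K
    obtain x where "x \<in> tail_products mop \<alpha> K" "x \<notin> W" using escape[of K] by blast
    then show "\<exists>m m' u u'. K < m \<and> K < m' \<and> u \<in> {0..1} \<and> u' \<in> {0..1} \<and>
        mop (\<alpha> m u) (\<alpha> m' u') \<notin> W"
      unfolding tail_products_def by blast
  qed
  then obtain M M' U U' where MU: "\<And>K. K < M K" "\<And>K. K < M' K" "\<And>K. U K \<in> {0..1}"
      "\<And>K. U' K \<in> {0..1}" "\<And>K. mop (\<alpha> (M K) (U K)) (\<alpha> (M' K) (U' K)) \<notin> W"
    unfolding choice_iff by blast
  have "\<forall>\<^sub>F K in sequentially. mop (\<alpha> (M K) (U K)) (\<alpha> (M' K) (U' K)) \<in> W"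
    using tendsto_tail_products[OF loops null MU(1-4)] W by (rule topological_tendstoD)
  then show False using MU(5) by (simp add: eventually_sequentially)
qed

end

section \<open>Peeling off the first loop\<close>

abbreviation unit_square :: "(real \<times> real) set" where
  "unit_square \<equiv> {0..1} \<times> {0..1}"

text \<open>Two paths from \<open>(0, 0)\<close> to \<open>(1, 1)\<close>: along the first one the first coordinate
  runs through \<open>[0, 1]\<close> while the second crosses the \<open>(k+1)\<close>-st interval, along the
  other one it does so while the second coordinate is still \<open>0\<close>.\<close>
definition interval_square_path :: "(nat \<Rightarrow> real) \<Rightarrow> (nat \<Rightarrow> real) \<Rightarrow> nat \<Rightarrow> real \<Rightarrow> real \<times> real" where
  "interval_square_path l r k u = (interval_param (l (Suc k)) (r (Suc k)) u, u)"

definition corner_square_path :: "nat \<Rightarrow> real \<Rightarrow> real \<times> real" where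
  "corner_square_path k u = (min 1 ((real k + 2) * u), max 0 ((u * (real k + 2) - 1) / (real k + 1)))"

lemma homotopic_square_paths:
  assumes "disjoint_intervals l r"
  shows "homotopic_paths unit_square (interval_square_path l r k) (corner_square_path k)"
proof (rule homotopic_paths_linear)
  show "path (interval_square_path l r k)"
    unfolding path_def interval_square_path_def
    by (intro continuous_on_Pair continuous_on_interval_param continuous_intros)
  show "path (corner_square_path k)"
    unfolding path_def corner_square_path_def by (intro continuous_intros) auto
  have lr: "l (Suc k) < r (Suc k)" "0 \<le> l (Suc k)" "r (Suc k) \<le> 1"
    using disjoint_intervalsD[OF assms, of "Suc k"] by auto
  show "pathstart (corner_square_path k) = pathstart (interval_square_path l r k)"
    "pathfinish (corner_square_path k) = pathfinish (interval_square_path l r k)"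
    unfolding pathstart_def pathfinish_def interval_square_path_def corner_square_path_def
    using interval_param_left[OF lr(1), of 0] interval_param_right[OF lr(1), of 1] lr by simp_all
  fix t :: real assume t: "t \<in> {0..1}"
  have "t * (real k + 2) \<le> 1 * (real k + 2)"
    using t by (intro mult_right_mono) auto
  then have "(t * (real k + 2) - 1) / (real k + 1) \<le> 1"
    by (subst pos_divide_le_eq) (simp_all add: algebra_simps)
  then have "corner_square_path k t \<in> unit_square"
    unfolding corner_square_path_def using t by auto
  moreover have "interval_square_path l r k t \<in> unit_square"
    unfolding interval_square_path_def using t by (simp add: interval_param_range)
  ultimately show "closed_segment (interval_square_path l r k t) (corner_square_path k t) \<subseteq> unit_square"
    by (intro closed_segment_subset convex_Times) auto
qed

locale arranged_loops = pre_delta mop e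
  for mop :: "'a::topological_space \<Rightarrow> 'a \<Rightarrow> 'a" and e +
  fixes l r :: "nat \<Rightarrow> real" and \<alpha> :: "nat \<Rightarrow> real \<Rightarrow> 'a"
  assumes disjoint: "disjoint_intervals l r"
    and loops: "\<forall>n\<ge>1. loop_at e (\<alpha> n)"
    and null: "null_sequence e \<alpha>"
begin

lemma loop_start: "n \<ge> 1 \<Longrightarrow> \<alpha> n 0 = e"
  and loop_finish: "n \<ge> 1 \<Longrightarrow> \<alpha> n 1 = e"
  and path_loop: "n \<ge> 1 \<Longrightarrow> path (\<alpha> n)"
  using loops unfolding loop_at_def pathstart_def pathfinish_def by auto

definition tail_loops :: "nat \<Rightarrow> nat \<Rightarrow> real \<Rightarrow> 'a" where
  "tail_loops k n = (if k < n then \<alpha> n else (\<lambda>_. e))"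

definition tail_arrangement :: "nat \<Rightarrow> real \<Rightarrow> 'a" where
  "tail_arrangement k = arrangement e l r (tail_loops k)"

definition split_map :: "nat \<Rightarrow> real \<times> real \<Rightarrow> 'a" where
  "split_map k q = mop (\<alpha> (Suc k) (fst q)) (tail_arrangement (Suc k) (snd q))"

text \<open>The loop \<open>\<alpha> (k+1)\<close> traversed on \<open>[0, 1/(k+2)]\<close>, followed by \<open>tail_arrangement (k+1)\<close>.\<close>
definition peeled_arrangement :: "nat \<Rightarrow> real \<Rightarrow> 'a" where
  "peeled_arrangement k = split_map k \<circ> corner_square_path k"

lemma tail_arrangement_0: "tail_arrangement 0 = arrangement e l r \<alpha>"
  unfolding tail_arrangement_def arrangement_def tail_loops_def
  by (intro ext) (auto simp: interval_index_eq[OF disjoint])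

lemma tail_loops: "\<forall>n\<ge>1. loop_at e (tail_loops k n)"
  using loops unfolding tail_loops_def loop_at_def by (auto simp: path_def pathstart_def pathfinish_def)

lemma null_tail_loops: "null_sequence e (tail_loops k)"
  unfolding null_sequence_def
proof (intro allI impI)
  fix W assume W: "open W \<and> e \<in> W"
  then have "\<forall>\<^sub>F n in sequentially. path_image (\<alpha> n) \<subseteq> W"
    using null unfolding null_sequence_def by blast
  then show "\<forall>\<^sub>F n in sequentially. path_image (tail_loops k n) \<subseteq> W"
    by eventually_elim (use W in \<open>auto simp: tail_loops_def path_image_def\<close>)
qed

lemma path_tail_arrangement: "path (tail_arrangement k)"
  unfolding tail_arrangement_def by (rule path_arrangement[OF disjoint tail_loops null_tail_loops])

lemma tail_arrangement_endpoints: "tail_arrangement k 0 = e" "tail_arrangement k 1 = e"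
proof -
  have "\<not> (l n < 0 \<and> 0 < r n)" "\<not> (l n < 1 \<and> 1 < r n)" if "n \<ge> 1" for n
    using disjoint_intervalsD[OF disjoint that] by auto
  then show "tail_arrangement k 0 = e" "tail_arrangement k 1 = e"
    unfolding tail_arrangement_def by (blast intro: arrangement_outside)+
qed

lemma tail_arrangement_values:
  "tail_arrangement k t = e \<or> (\<exists>m u. k < m \<and> u \<in> {0..1} \<and> tail_arrangement k t = \<alpha> m u)"
proof -
  have "tail_loops k n u = e \<or> (k < n \<and> tail_loops k n u = \<alpha> n u)" for n u
    unfolding tail_loops_def by simp
  then show ?thesis
    using arrangement_values[OF disjoint, of e "tail_loops k" t]
    unfolding tail_arrangement_def by metis
qed

lemma split_map_in_tail_products:
  assumes "q \<in> unit_square"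
  shows "split_map k q \<in> tail_products mop \<alpha> k"
proof -
  have "tail_arrangement (Suc k) (snd q) = \<alpha> (Suc (Suc k)) 0 \<or>
      (\<exists>m u. Suc k < m \<and> u \<in> {0..1} \<and> tail_arrangement (Suc k) (snd q) = \<alpha> m u)"
    using tail_arrangement_values[of "Suc k" "snd q"] loop_start[of "Suc (Suc k)"] by auto
  then obtain m u where "k < m" "u \<in> {0..1}" "tail_arrangement (Suc k) (snd q) = \<alpha> m u"
    by (metis Suc_lessD atLeastAtMost_iff lessI order_refl zero_le_one)
  then show ?thesis
    using assms unfolding split_map_def tail_products_def by force
qed

lemma continuous_on_split_map: "continuous_on unit_square (split_map k)"
proof -
  have image: "fst ` unit_square \<subseteq> {0..1}" "snd ` unit_square \<subseteq> {0..1}" by auto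
  have "continuous_on unit_square fst" "continuous_on unit_square snd"
    by (intro continuous_intros)+
  then have "continuous_on unit_square (\<lambda>q. \<alpha> (Suc k) (fst q))"
    "continuous_on unit_square (\<lambda>q. tail_arrangement (Suc k) (snd q))"
    using continuous_on_compose2[OF path_loop[of "Suc k", unfolded path_def] _ image(1)]
      continuous_on_compose2[OF path_tail_arrangement[of "Suc k", unfolded path_def] _ image(2)]
    by simp_all
  then show ?thesis
    unfolding split_map_def by (rule continuous_on_mop) (intro convex_Times convex_real_interval)
qed

text \<open>Removing the loop \<open>\<alpha> (k+1)\<close> from its own interval shows \<open>tail_arrangement k\<close> as the
  image of a path in the unit square.\<close>
lemma tail_arrangement_eq_split_map: "tail_arrangement k = split_map k \<circ> interval_square_path l r k"
proof
  fix u
  define p where "p = interval_param (l (Suc k)) (r (Suc k)) u"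
  have split: "(split_map k \<circ> interval_square_path l r k) u = mop (\<alpha> (Suc k) p) (tail_arrangement (Suc k) u)"
    unfolding split_map_def interval_square_path_def p_def by simp
  have "loop_at e (\<alpha> (Suc k))" using loops by simp
  then have outside: "\<alpha> (Suc k) p = e" if "\<not> (l (Suc k) < u \<and> u < r (Suc k))"
    unfolding p_def using loop_at_param[OF _ disjoint_intervalsD(2)[OF disjoint] that] by simp
  have inside: "tail_arrangement j u = tail_loops j n (interval_param (l n) (r n) u)"
    if "n \<ge> 1" "l n < u" "u < r n" for j n
    unfolding tail_arrangement_def by (rule arrangement_inside[OF disjoint that])
  show "tail_arrangement k u = (split_map k \<circ> interval_square_path l r k) u"
  proof (cases "\<exists>n\<ge>1. l n < u \<and> u < r n")
    case True
    then obtain n where n: "n \<ge> 1" "l n < u" "u < r n" by blast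
    show ?thesis
    proof (cases "n = Suc k")
      case True
      then show ?thesis unfolding split inside[OF n] p_def by (simp add: tail_loops_def)
    next
      case False
      then have "\<not> (l (Suc k) < u \<and> u < r (Suc k))"
        using interval_index_eq[OF disjoint n] interval_index_eq[OF disjoint, of "Suc k" u] by auto
      then have "\<alpha> (Suc k) p = e" by (rule outside)
      with False show ?thesis unfolding split inside[OF n] by (simp add: tail_loops_def)
    qed
  next
    case False
    then show ?thesis
      using outside unfolding split tail_arrangement_def by (simp add: arrangement_outside)
  qed
qed

lemma tail_arrangement_homotopic_peeled:
  "homotopic_paths (tail_products mop \<alpha> k) (tail_arrangement k) (peeled_arrangement k)"
proof -
  have "homotopic_paths (split_map k ` unit_square)
      (split_map k \<circ> interval_square_path l r k) (split_map k \<circ> corner_square_path k)"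
    by (rule homotopic_paths_continuous_image[OF homotopic_square_paths[OF disjoint]
          continuous_on_split_map]) auto
  then show ?thesis
    unfolding peeled_arrangement_def tail_arrangement_eq_split_map[symmetric]
    by (rule homotopic_paths_subset) (use split_map_in_tail_products in auto)
qed

lemma peeled_arrangement_head:
  assumes "0 \<le> u" "(real k + 2) * u \<le> 1"
  shows "peeled_arrangement k u = \<alpha> (Suc k) ((real k + 2) * u)"
proof -
  have "(u * (real k + 2) - 1) / (real k + 1) \<le> 0"
    using assms by (simp add: divide_le_0_iff mult.commute)
  then show ?thesis
    using assms tail_arrangement_endpoints(1)
    unfolding peeled_arrangement_def split_map_def corner_square_path_def by simp
qed

lemma peeled_arrangement_rest:
  assumes "1 \<le> (real k + 2) * u"
  shows "peeled_arrangement k u = tail_arrangement (Suc k) ((u * (real k + 2) - 1) / (real k + 1))"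
proof -
  have "(u * (real k + 2) - 1) / (real k + 1) \<ge> 0" using assms by (simp add: mult.commute)
  then show ?thesis
    using assms loop_finish[of "Suc k"]
    unfolding peeled_arrangement_def split_map_def corner_square_path_def by simp
qed

end

section \<open>Stacking the homotopies\<close>

context arranged_loops
begin

lemma standard_arrangement_on_strip:
  assumes "knot k \<le> t" "t \<le> knot (Suc k)"
  shows "standard_arrangement e \<alpha> t = \<alpha> (Suc k) (strip_param k t)"
  using standard_arrangement_strip[OF loops assms] strip_param_eq_interval_param[OF assms] by simp

definition peel_homotopy :: "nat \<Rightarrow> real \<times> real \<Rightarrow> 'a" where
  "peel_homotopy k = (SOME h. continuous_on unit_square h \<and> h ` unit_square \<subseteq> tail_products mop \<alpha> k \<and>
     (\<forall>x\<in>{0..1}. h (0, x) = tail_arrangement k x \<and> h (1, x) = peeled_arrangement k x) \<and>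
     (\<forall>s\<in>{0..1}. h (s, 0) = e \<and> h (s, 1) = e))"

lemma
  shows continuous_on_peel_homotopy: "continuous_on unit_square (peel_homotopy k)"
    and peel_homotopy_in_tail_products: "q \<in> unit_square \<Longrightarrow> peel_homotopy k q \<in> tail_products mop \<alpha> k"
    and peel_homotopy_0: "x \<in> {0..1} \<Longrightarrow> peel_homotopy k (0, x) = tail_arrangement k x"
    and peel_homotopy_1: "x \<in> {0..1} \<Longrightarrow> peel_homotopy k (1, x) = peeled_arrangement k x"
    and peel_homotopy_ends: "s \<in> {0..1} \<Longrightarrow> peel_homotopy k (s, 0) = e"
      "s \<in> {0..1} \<Longrightarrow> peel_homotopy k (s, 1) = e"
proof -
  have "\<exists>h. continuous_on unit_square h \<and> h ` unit_square \<subseteq> tail_products mop \<alpha> k \<and>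
     (\<forall>x\<in>{0..1}. h (0, x) = tail_arrangement k x \<and> h (1, x) = peeled_arrangement k x) \<and>
     (\<forall>s\<in>{0..1}. h (s, 0) = e \<and> h (s, 1) = e)"
    using tail_arrangement_homotopic_peeled[of k] tail_arrangement_endpoints[of k]
    unfolding homotopic_paths pathstart_def pathfinish_def by (auto simp: image_subset_iff_funcset)
  then have "continuous_on unit_square (peel_homotopy k) \<and>
     peel_homotopy k ` unit_square \<subseteq> tail_products mop \<alpha> k \<and>
     (\<forall>x\<in>{0..1}. peel_homotopy k (0, x) = tail_arrangement k x \<and>
        peel_homotopy k (1, x) = peeled_arrangement k x) \<and>
     (\<forall>s\<in>{0..1}. peel_homotopy k (s, 0) = e \<and> peel_homotopy k (s, 1) = e)"
    unfolding peel_homotopy_def by (rule someI_ex)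
  then show "continuous_on unit_square (peel_homotopy k)"
    "q \<in> unit_square \<Longrightarrow> peel_homotopy k q \<in> tail_products mop \<alpha> k"
    "x \<in> {0..1} \<Longrightarrow> peel_homotopy k (0, x) = tail_arrangement k x"
    "x \<in> {0..1} \<Longrightarrow> peel_homotopy k (1, x) = peeled_arrangement k x"
    "s \<in> {0..1} \<Longrightarrow> peel_homotopy k (s, 0) = e" "s \<in> {0..1} \<Longrightarrow> peel_homotopy k (s, 1) = e"
    by blast+
qed

text \<open>At stage \<open>k\<close> the first \<open>k\<close> loops already run through their standard strips, and the
  tail past them is deformed by \<open>peel_homotopy k\<close> on \<open>[knot k, 1]\<close>.\<close>
definition stage_homotopy :: "nat \<Rightarrow> real \<times> real \<Rightarrow> 'a" where
  "stage_homotopy k q = (if snd q \<le> knot k then standard_arrangement e \<alpha> (snd q)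
     else peel_homotopy k (fst q, tail_param k (snd q)))"

definition stacked_homotopy :: "real \<times> real \<Rightarrow> 'a" where
  "stacked_homotopy q = (if 1 \<le> fst q then standard_arrangement e \<alpha> (snd q)
     else stage_homotopy (knot_index (fst q)) (strip_param (knot_index (fst q)) (fst q), snd q))"

lemma continuous_on_stage_homotopy: "continuous_on unit_square (stage_homotopy k)"
proof -
  have "continuous_on {q \<in> unit_square. snd q \<le> knot k} (\<lambda>q. standard_arrangement e \<alpha> (snd q))"
    using path_standard_arrangement[OF loops null] unfolding path_def
    by (rule continuous_on_compose2) (auto intro: continuous_intros)
  moreover have "continuous_on {q \<in> unit_square. knot k \<le> snd q}
      (\<lambda>q. peel_homotopy k (fst q, tail_param k (snd q)))"
    using continuous_on_peel_homotopy
    by (rule continuous_on_compose2)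
      (auto simp: tail_param_def intro!: continuous_intros dest: tail_param_range[of k])
  ultimately show ?thesis
    unfolding stage_homotopy_def
    by (rule continuous_on_cases_le) (auto intro: continuous_intros simp: standard_arrangement_knot
        tail_param_def peel_homotopy_ends)
qed

lemma stage_homotopy_ends: "s \<in> {0..1} \<Longrightarrow> stage_homotopy k (s, 0) = e"
  "s \<in> {0..1} \<Longrightarrow> stage_homotopy k (s, 1) = e"
  unfolding stage_homotopy_def
  using knot_less_1[of k] peel_homotopy_ends[of s k] standard_arrangement_knot[of e \<alpha> 0]
  by (simp_all add: knot_nonneg)

text \<open>Consecutive stages fit together because \<open>peeled_arrangement k\<close> is \<open>\<alpha> (k+1)\<close> on its
  standard strip followed by \<open>tail_arrangement (k+1)\<close>.\<close>
lemma stage_homotopy_Suc: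
  assumes t: "t \<in> {0..1}"
  shows "stage_homotopy k (1, t) = stage_homotopy (Suc k) (0, t)"
proof -
  consider "t \<le> knot k" | "knot k < t" "t \<le> knot (Suc k)" | "knot (Suc k) < t" by linarith
  then show ?thesis
  proof cases
    case 1
    have "knot k \<le> knot (Suc k)" by simp
    with 1 have "t \<le> knot (Suc k)" by linarith
    with 1 show ?thesis unfolding stage_homotopy_def by simp
  next
    case 2
    have u: "tail_param k t \<in> {0..1}" using tail_param_range[of k t] 2 t by simp
    have "(real k + 2) * tail_param k t = strip_param k t"
      by (simp add: strip_param_eq_tail_param)
    moreover have "strip_param k t \<le> 1" using strip_param_range[of k t] 2 by simp
    ultimately have "stage_homotopy k (1, t) = \<alpha> (Suc k) (strip_param k t)"
      using 2 u unfolding stage_homotopy_def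
      by (simp add: peel_homotopy_1 peeled_arrangement_head)
    also have "\<dots> = stage_homotopy (Suc k) (0, t)"
      using 2 standard_arrangement_on_strip[of k t] unfolding stage_homotopy_def by simp
    finally show ?thesis .
  next
    case 3
    have "knot k \<le> knot (Suc k)" by simp
    with 3 have "knot k < t" by linarith
    then have u: "tail_param k t \<in> {0..1}" "tail_param (Suc k) t \<in> {0..1}"
      using tail_param_range[of k t] tail_param_range[of "Suc k" t] 3 t by simp_all
    have "strip_param k (knot (Suc k)) < strip_param k t"
      unfolding strip_param_def using 3 by (intro mult_strict_right_mono) auto
    then have "1 < strip_param k t" by simp
    then have "1 \<le> (real k + 2) * tail_param k t" by (simp add: strip_param_eq_tail_param)
    then have "stage_homotopy k (1, t) = tail_arrangement (Suc k) (tail_param (Suc k) t)"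
      using 3 u \<open>knot k < t\<close> unfolding stage_homotopy_def
      by (simp add: peel_homotopy_1 peeled_arrangement_rest tail_param_Suc)
    also have "\<dots> = stage_homotopy (Suc k) (0, t)"
      using 3 u unfolding stage_homotopy_def by (simp add: peel_homotopy_0)
    finally show ?thesis .
  qed
qed

lemma stacked_homotopy_on_strip:
  assumes s: "knot n \<le> s" "s \<le> knot (Suc n)" and y: "y \<in> {0..1}"
  shows "stacked_homotopy (s, y) = stage_homotopy n (strip_param n s, y)"
proof (cases "s < knot (Suc n)")
  case True
  then show ?thesis
    using knot_index_eq[OF s(1) True] knot_less_1[of "Suc n"] unfolding stacked_homotopy_def by simp
next
  case False
  then have "s = knot (Suc n)" using s by simp
  moreover have "knot_index (knot (Suc n)) = Suc n" by (rule knot_index_eq) simp_all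
  ultimately show ?thesis
    using knot_less_1[of "Suc n"] stage_homotopy_Suc[OF y, of n]
    unfolding stacked_homotopy_def by simp
qed

lemma continuous_on_stacked_homotopy_strip:
  "continuous_on ({knot n..knot (Suc n)} \<times> {0..1}) stacked_homotopy"
proof -
  define S where "S = {knot n..knot (Suc n)} \<times> {0..1::real}"
  have "(\<lambda>q. (strip_param n (fst q), snd q)) ` S \<subseteq> unit_square"
    unfolding S_def by (auto simp: strip_param_range[simplified])
  moreover have "continuous_on S (\<lambda>q. (strip_param n (fst q), snd q))"
    unfolding strip_param_def by (intro continuous_intros)
  ultimately have "continuous_on S (stage_homotopy n \<circ> (\<lambda>q. (strip_param n (fst q), snd q)))"
    by (intro continuous_on_compose continuous_on_subset[OF continuous_on_stage_homotopy])
  then show ?thesis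
    unfolding S_def by (rule continuous_on_eq) (auto simp: stacked_homotopy_on_strip)
qed

lemma stacked_homotopy_below_1:
  assumes "s < 1"
  shows "stacked_homotopy (s, y) = (if y \<le> knot (knot_index s) then standard_arrangement e \<alpha> y
    else peel_homotopy (knot_index s) (strip_param (knot_index s) s, tail_param (knot_index s) y))"
  using assms unfolding stacked_homotopy_def stage_homotopy_def by simp

lemma stacked_homotopy_top: "stacked_homotopy (1, y) = standard_arrangement e \<alpha> y"
  unfolding stacked_homotopy_def by simp

lemma stacked_homotopy_below_knot:
  assumes "knot N < s" "s \<le> 1" "y < knot N" "y \<in> {0..1}"
  shows "stacked_homotopy (s, y) = standard_arrangement e \<alpha> y"
proof (cases "s < 1")
  case True
  have "knot N \<le> knot (knot_index s)" using knot_index_ge[OF assms(1) True] by simp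
  then have "y \<le> knot (knot_index s)" using assms(3) by linarith
  then show ?thesis using stacked_homotopy_below_1[OF True] by simp
qed (use assms stacked_homotopy_top in simp)

text \<open>Above the current knot the values of the homotopy are products of late loops, which
  are close to \<open>e\<close>.\<close>
lemma stacked_homotopy_near_corner:
  assumes "open B" "e \<in> B"
  obtains N where "\<And>s y. knot N < s \<Longrightarrow> s \<le> 1 \<Longrightarrow> y \<in> {0..1} \<Longrightarrow>
    stacked_homotopy (s, y) \<in> insert (standard_arrangement e \<alpha> y) B"
proof -
  obtain K where K: "\<And>k. k \<ge> K \<Longrightarrow> tail_products mop \<alpha> k \<subseteq> B"
    using eventually_tail_products_subset[OF loops null assms] unfolding eventually_sequentially by blast
  have "stacked_homotopy (s, y) \<in> insert (standard_arrangement e \<alpha> y) B"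
    if "knot K < s" "s \<le> 1" "y \<in> {0..1}" for s y
  proof (cases "s < 1 \<and> knot (knot_index s) < y")
    case True
    have k: "K \<le> knot_index s" "0 \<le> s"
      using knot_index_ge[OF that(1)] knot_nonneg[of K] True that(1) by auto
    have "strip_param (knot_index s) s \<in> {0..1}" "tail_param (knot_index s) y \<in> {0..1}"
      using strip_param_range knot_index_bounds[of s] tail_param_range[of _ y] True that k(2)
      by auto
    then have "peel_homotopy (knot_index s) (strip_param (knot_index s) s, tail_param (knot_index s) y) \<in> B"
      using K[OF k(1)] peel_homotopy_in_tail_products[of "(strip_param (knot_index s) s, _)"] by auto
    then show ?thesis using True stacked_homotopy_below_1[of s y] by simp
  next
    case False
    show ?thesis
    proof (cases "s < 1")
      case True
      then show ?thesis using False stacked_homotopy_below_1[of s y] by simp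
    qed (use that stacked_homotopy_top in simp)
  qed
  then show ?thesis by (rule that)
qed

lemma stacked_homotopy_near_top:
  assumes x: "x \<in> {0..1}" and B: "open B" "stacked_homotopy (1, x) \<in> B"
  shows "\<exists>A N. open A \<and> x \<in> A \<and>
    (\<forall>s y. knot N < s \<and> s \<le> 1 \<and> y \<in> {0..1} \<and> y \<in> A \<longrightarrow> stacked_homotopy (s, y) \<in> B)"
proof -
  have "standard_arrangement e \<alpha> x \<in> B" using B stacked_homotopy_top by simp
  then obtain A where A: "open A" "x \<in> A" "\<And>y. y \<in> {0..1} \<Longrightarrow> y \<in> A \<Longrightarrow> standard_arrangement e \<alpha> y \<in> B"
    using continuous_on_topological[THEN iffD1, OF path_standard_arrangement[OF loops null,
        unfolded path_def], rule_format, OF x B(1)] by blast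
  show ?thesis
  proof (cases "x < 1")
    case True
    then obtain N where N: "x < knot N" using exists_knot_above by blast
    show ?thesis
      using A N stacked_homotopy_below_knot
      by (intro exI[of _ "A \<inter> {..<knot N}"] exI[of _ N]) auto
  next
    case False
    then have "e \<in> B" using A(3)[OF x A(2)] x standard_arrangement_1[of e \<alpha>] by simp
    then obtain N where N: "\<And>s y. knot N < s \<Longrightarrow> s \<le> 1 \<Longrightarrow> y \<in> {0..1} \<Longrightarrow>
        stacked_homotopy (s, y) \<in> insert (standard_arrangement e \<alpha> y) B"
      using stacked_homotopy_near_corner B(1) by blast
    have "stacked_homotopy (s, y) \<in> B" if "knot N < s" "s \<le> 1" "y \<in> {0..1}" "y \<in> A" for s y
      using N[OF that(1-3)] A(3)[OF that(3,4)] by auto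
    then show ?thesis using A by (intro exI[of _ A] exI[of _ N]) auto
  qed
qed

lemma continuous_on_stacked_homotopy: "continuous_on unit_square stacked_homotopy"
  by (rule continuous_on_knot_strips[OF closed_atLeastAtMost continuous_on_stacked_homotopy_strip
        stacked_homotopy_near_top])

lemma arrangement_homotopic_standard:
  "homotopic_paths UNIV (arrangement e l r \<alpha>) (standard_arrangement e \<alpha>)"
  unfolding homotopic_paths
proof (intro exI[of _ stacked_homotopy] conjI ballI)
  show "continuous_on unit_square stacked_homotopy" by (rule continuous_on_stacked_homotopy)
  fix x :: real assume x: "x \<in> {0..1}"
  have "knot_index 0 = 0" by (rule knot_index_eq) simp_all
  then show "stacked_homotopy (0, x) = arrangement e l r \<alpha> x"
    using x standard_arrangement_knot[of e \<alpha> 0] tail_arrangement_endpoints(1)[of 0]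
    unfolding stacked_homotopy_def stage_homotopy_def tail_arrangement_0[symmetric]
    by (auto simp: peel_homotopy_0 tail_param_def strip_param_def)
  show "stacked_homotopy (1, x) = standard_arrangement e \<alpha> x" by (rule stacked_homotopy_top)
next
  fix t :: real assume t: "t \<in> {0..1}"
  have "stacked_homotopy (t, 0) = e" "stacked_homotopy (t, 1) = e"
    using stage_homotopy_ends standard_arrangement_knot[of e \<alpha> 0] standard_arrangement_1[of e \<alpha>]
      strip_param_range knot_index_bounds[of t] t
    unfolding stacked_homotopy_def by (auto simp: knot_nonneg)
  then show "pathstart (stacked_homotopy \<circ> Pair t) = pathstart (arrangement e l r \<alpha>)"
    "pathfinish (stacked_homotopy \<circ> Pair t) = pathfinish (arrangement e l r \<alpha>)"
    using tail_arrangement_endpoints[of 0] unfolding tail_arrangement_0 pathstart_def pathfinish_def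
    by simp_all
qed simp

end

section \<open>The transfinite slide\<close>

lemma disjoint_intervals_gaps: "disjoint_intervals gap_left gap_right"
  unfolding disjoint_intervals_def
proof (intro conjI allI impI)
  fix n m :: nat assume "n \<ge> 1" "m \<ge> 1" "n \<noteq> m"
  then show "gap_right n \<le> gap_left m \<or> gap_right m \<le> gap_left n"
    using gaps_ordered by blast
qed (use gap_bounds less_imp_le in blast)+

context pre_delta
begin

lemma transfinite_slide_eq_arrangement:
  "transfinite_slide mop \<beta> \<alpha> = (\<lambda>t. mop (\<beta> (cantor_fun t)) (arrangement e gap_left gap_right \<alpha> t))"
proof
  fix t
  have gaps: "t \<in> {0..1} - cantor_set \<longleftrightarrow> (\<exists>n\<ge>1. gap_left n < t \<and> t < gap_right n)"
    unfolding cantor_set_def gap_def using gap_bounds by (force simp: less_imp_le)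
  show "transfinite_slide mop \<beta> \<alpha> t = mop (\<beta> (cantor_fun t)) (arrangement e gap_left gap_right \<alpha> t)"
  proof (cases "\<exists>n\<ge>1. gap_left n < t \<and> t < gap_right n")
    case True
    have "gap_index t = interval_index gap_left gap_right t"
      unfolding gap_index_def interval_index_def gap_def by simp
    then show ?thesis
      using True gaps unfolding transfinite_slide_def arrangement_def gap_param_def by simp
  next
    case False
    then have not_gap: "t \<notin> {0..1} - cantor_set" using gaps by blast
    show ?thesis
      using False unfolding transfinite_slide_def if_not_P[OF not_gap]
      by (simp add: arrangement_outside)
  qed
qed

lemma homotopic_paths_mop:
  assumes "homotopic_paths UNIV p p'" "homotopic_paths UNIV q q'"
  shows "homotopic_paths UNIV (\<lambda>t. mop (p t) (q t)) (\<lambda>t. mop (p' t) (q' t))"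
proof -
  obtain g where g: "continuous_on unit_square g" "\<forall>x\<in>{0..1}. g (0, x) = p x \<and> g (1, x) = p' x"
      "\<forall>s\<in>{0..1}. g (s, 0) = p 0 \<and> g (s, 1) = p 1"
    using assms(1) unfolding homotopic_paths pathstart_def pathfinish_def by auto
  obtain h where h: "continuous_on unit_square h" "\<forall>x\<in>{0..1}. h (0, x) = q x \<and> h (1, x) = q' x"
      "\<forall>s\<in>{0..1}. h (s, 0) = q 0 \<and> h (s, 1) = q 1"
    using assms(2) unfolding homotopic_paths pathstart_def pathfinish_def by auto
  have "continuous_on unit_square (\<lambda>z. mop (g z) (h z))"
    using g(1) h(1) by (rule continuous_on_mop) (intro convex_Times convex_real_interval)
  then show ?thesis
    unfolding homotopic_paths pathstart_def pathfinish_def using g h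
    by (intro exI[of _ "\<lambda>z. mop (g z) (h z)"]) auto
qed

lemma arrangement_gaps_homotopic_reindex:
  assumes loops: "\<forall>n\<ge>1. loop_at e (\<alpha> n)" and null: "null_sequence e \<alpha>"
    and \<phi>: "bij_betw \<phi> {1..} {1..}"
  shows "homotopic_paths UNIV (arrangement e gap_left gap_right \<alpha>)
    (arrangement e gap_left gap_right (\<lambda>n. \<alpha> (\<phi> n)))"
proof -
  define \<psi> where "\<psi> = inv_into {1..} \<phi>"
  have \<psi>: "bij_betw \<psi> {1..} {1..}" unfolding \<psi>_def by (rule bij_betw_inv_into[OF \<phi>])
  interpret gaps: arranged_loops mop e gap_left gap_right \<alpha>
    by unfold_locales (fact disjoint_intervals_gaps loops null)+
  interpret permuted: arranged_loops mop e "\<lambda>n. gap_left (\<psi> n)" "\<lambda>n. gap_right (\<psi> n)" \<alpha>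
    by unfold_locales (fact disjoint_intervals_reindex[OF disjoint_intervals_gaps \<psi>] loops null)+
  show ?thesis
    unfolding arrangement_reindex[OF disjoint_intervals_gaps \<phi>] \<psi>_def[symmetric]
    using gaps.arrangement_homotopic_standard permuted.arrangement_homotopic_standard
    by (meson homotopic_paths_sym homotopic_paths_trans)
qed

end

lemma homotopic_paths_cantor_reparam:
  "path \<beta> \<Longrightarrow> homotopic_paths UNIV \<beta> (\<beta> \<circ> cantor_fun)"
  by (rule homotopic_paths_reparametrize[where f = cantor_fun])
    (auto intro: continuous_on_subset[OF continuous_cantor_fun]
      simp: cantor_fun_0 cantor_fun_1 cantor_fun_nonneg cantor_fun_le_1)

theorem mainTheorem14:
  fixes mop :: "'a::topological_space \<Rightarrow> 'a \<Rightarrow> 'a" and e b :: 'a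
    and \<alpha> :: "nat \<Rightarrow> real \<Rightarrow> 'a" and \<beta> \<beta>' :: "real \<Rightarrow> 'a" and \<phi> :: "nat \<Rightarrow> nat"
  assumes "pre_delta_monoid mop e"
    and "path_connected (UNIV :: 'a set)"
    and "\<forall>n\<ge>1. loop_at e (\<alpha> n)"
    and "null_sequence e \<alpha>"
    and "path \<beta>" "pathstart \<beta> = e" "pathfinish \<beta> = b"
    and "path \<beta>'" "pathstart \<beta>' = e" "pathfinish \<beta>' = b"
    and "homotopic_paths UNIV \<beta> \<beta>'"
    and "bij_betw \<phi> {1..} {1..}"
  shows "homotopic_paths UNIV (transfinite_slide mop \<beta> \<alpha>)
           (transfinite_slide mop \<beta>' (\<lambda>n. \<alpha> (\<phi> n)))"
proof -
  interpret pre_delta mop e by unfold_locales (rule assms(1))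
  have "homotopic_paths UNIV (\<beta> \<circ> cantor_fun) (\<beta>' \<circ> cantor_fun)"
    using homotopic_paths_cantor_reparam[OF assms(5)] homotopic_paths_cantor_reparam[OF assms(8)]
      assms(11)
    by (meson homotopic_paths_sym homotopic_paths_trans)
  then show ?thesis
    unfolding transfinite_slide_eq_arrangement
    using homotopic_paths_mop arrangement_gaps_homotopic_reindex[OF assms(3,4,12)]
    by (simp add: o_def)
qed

end
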